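(* Consider an ergodic Jackson network process $\mathbf{X}$ (setting in the context) with stationary distribution $\xi(\mathbf{n})=\prod_{j=1}^{J}\prod_{k=1}^{n_j}\frac{\eta_j}{\mu_j(k)}C(j)^{-1}$. Let $\boldsymbol{\gamma}\in[0,\infty)^{\overline{J}}$, define $\boldsymbol{\alpha}=(\alpha_j:j\in\overline{J}_0)$ and $\beta$ as in the context, and let $r^{(\boldsymbol{\alpha})}=(r^{(\boldsymbol{\alpha})}(i,j):i,j\in\overline{J}_0)$ be any stochastic matrix having $(\alpha_j\eta_j:j\in\overline{J}_0)$ as an invariant measure. Let $\mathbf{X}^{(\boldsymbol{\gamma})}$ be the continuous-time Markov chain on $\mathbb{N}_0^{\overline{J}}$ whose positive rates are $q(\mathbf{n},\mathbf{n}+\mathbf{e}_i)=\beta\lambda r^{(\boldsymbol{\alpha})}(0,i)$ for $i\in\overline{J}$, $q(\mathbf{n},\mathbf{n}-\mathbf{e}_j+\mathbf{e}_i)=1_{[n_j>0]}\gamma_j\mu_j(n_j)r^{(\boldsymbol{\alpha})}(j,i)$ for $i\ne j$ in $\overline{J}$, and $q(\mathbf{n},\mathbf{n}-\mathbf{e}_j)=1_{[n_j>0]}\gamma_j\mu_j(n_j)r^{(\boldsymbol{\alpha})}(j,0)$. Let $B(\boldsymbol{\gamma})=\{j\in\overline{J}:\gamma_j=0\}$, $W(\boldsymbol{\gamma})=\overline{J}\setminus B(\boldsymbol{\gamma})$. Then $\xi$ is a stationary distribution of $\mathbf{X}^{(\boldsymbol{\gamma})}$. If $B(\boldsymbol{\gamma})=\emptyset$,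 then $\mathbf{X}^{(\boldsymbol{\gamma})}$ is ergodic. If $B(\boldsymbol{\gamma})\ne\emptyset$, then $\mathbf{X}^{(\boldsymbol{\gamma})}$ is not irreducible on $\mathbb{N}_0^{\overline{J}}$, its state space splits into the infinitely many closed subspaces $\mathbb{N}_0^{W(\boldsymbol{\gamma})}\times\{(n_j:j\in B(\boldsymbol{\gamma}))\}$, and for every probability distribution $\varphi$ on $\mathbb{N}_0^{B(\boldsymbol{\gamma})}$, \[ \xi^{(\boldsymbol{\gamma})}_\varphi(\mathbf{n})=\prod_{j\in W(\boldsymbol{\gamma})}\prod_{k=1}^{n_j}\frac{\eta_j}{\mu_j(k)}C(j)^{-1}\cdot\varphi(n_j:j\in B(\boldsymbol{\gamma})) \] is a stationary distribution of $\mathbf{X}^{(\boldsymbol{\gamma})}$.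
   Context: Jackson network setting: node set $\overline{J}=\{1,\dots,J\}$, extended node set $\overline{J}_0=\{0,\dots,J\}$. External Poisson arrival rates $\lambda_j\ge0$, $\lambda=\sum_j\lambda_j>0$; service intensities $\mu_j(n)>0$ for $n\ge1$. Extended routing matrix $r$ on $\overline{J}_0$ is stochastic and irreducible with $r(0,j)=\lambda_j/\lambda$, $r(0,0)=0$; $\eta$ with $\eta_0=\lambda$ solves $\eta_j=\sum_{i\in\overline{J}_0}\eta_i r(i,j)$, $j\in\overline{J}_0$. $\mathbf{X}$ is the Markov chain on $\mathbb{N}_0^{\overline{J}}$ with rates $\lambda r(0,i)$ for $\mathbf{n}\to\mathbf{n}+\mathbf{e}_i$, $1_{[n_j>0]}\mu_j(n_j)r(j,i)$ for $\mathbf{n}\to\mathbf{n}-\mathbf{e}_j+\mathbf{e}_i$ ($i\ne j$), $1_{[n_j>0]}\mu_j(n_j)r(j,0)$ for $\mathbf{n}\to\mathbf{n}-\mathbf{e}_j$; assumed ergodic, with $C(j)=\sum_{n\ge0}\prod_{k=1}^n\eta_j/\mu_j(k)<\infty$. Given $\boldsymbol{\gamma}$, $\|\boldsymbol{\gamma}\|_\infty=\max_j\gamma_j$: $\alpha_0=1$; $\alpha_j=\gamma_j$ ($j\in\overline{J}$) if $\|\boldsymbol{\gamma}\|_\infty\le1$ and $\alpha_j=\gamma_j/\|\boldsymbol{\gamma}\|_\infty$ otherwise; $\beta=1$ if $\|\boldsymbol{\gamma}\|_\infty\le1$ and $\beta=\|\boldsymbol{\gamma}\|_\infty$ otherwi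se.
   Formalization: The ergodicity of $\mathbf{X}^{(\boldsymbol{\gamma})}$ when $B(\boldsymbol{\gamma})=\emptyset$ is claimed only when the stochastic matrix $r^{(\boldsymbol{\alpha})}$ is also irreducible on $\overline{J}_0$. The statement above fails without it. *)

theory Defs
  imports "HOL-Analysis.Analysis"
begin

definition outrate :: "'s set \<Rightarrow> ('s \<Rightarrow> 's \<Rightarrow> real) \<Rightarrow> 's \<Rightarrow> real" where
  "outrate S q x = infsum (\<lambda>y. q x y) (S - {x})"

definition stationary_dist :: "'s set \<Rightarrow> ('s \<Rightarrow> 's \<Rightarrow> real) \<Rightarrow> ('s \<Rightarrow> real) \<Rightarrow> bool" where
  "stationary_dist S q p \<longleftrightarrow>
     (\<forall>x\<in>S. 0 \<le> p x) \<and> (p has_sum 1) S \<and>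
     (\<forall>x\<in>S. ((\<lambda>y. p y * q y x) has_sum (p x * outrate S q x)) (S - {x}))"

definition trans_rel :: "'s set \<Rightarrow> ('s \<Rightarrow> 's \<Rightarrow> real) \<Rightarrow> ('s \<times> 's) set" where
  "trans_rel S q = {(x, y). x \<in> S \<and> y \<in> S \<and> x \<noteq> y \<and> q x y > 0}"

definition irreducible_ctmc :: "'s set \<Rightarrow> ('s \<Rightarrow> 's \<Rightarrow> real) \<Rightarrow> bool" where
  "irreducible_ctmc S q \<longleftrightarrow> (\<forall>x\<in>S. \<forall>y\<in>S. (x, y) \<in> (trans_rel S q)\<^sup>*)"

definition closed_set :: "'s set \<Rightarrow> ('s \<Rightarrow> 's \<Rightarrow> real) \<Rightarrow> 's set \<Rightarrow> bool" where
  "closed_set S q C \<longleftrightarrow> C \<subseteq> S \<and> (\<forall>x\<in>C. \<forall>y\<in>S - C. q x y = 0)"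

definition jump_prob :: "'s set \<Rightarrow> ('s \<Rightarrow> 's \<Rightarrow> real) \<Rightarrow> 's \<Rightarrow> 's \<Rightarrow> real" where
  "jump_prob S q x y = q x y / outrate S q x"

fun path_weight :: "('s \<Rightarrow> 's \<Rightarrow> real) \<Rightarrow> 's list \<Rightarrow> real" where
  "path_weight P (a # b # rest) = P a b * path_weight P (b # rest)"
| "path_weight P _ = 1"

text \<open>First-return excursions from x: x, ys, x with all ys in S - {x}.
  Recurrence: the jump chain returns to x with probability 1.
  Positive recurrence: additionally the expected return time
  (sum of the expected holding times 1/q(z) along the excursion) is finite.\<close>
definition positive_recurrent :: "'s set \<Rightarrow> ('s \<Rightarrow> 's \<Rightarrow> real) \<Rightarrow> 's \<Rightarrow> bool" where
  "positive_recurrent S q x \<longleftrightarrow>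
     0 < outrate S q x \<and>
     ((\<lambda>ys. path_weight (jump_prob S q) (x # ys @ [x])) has_sum 1) (lists (S - {x})) \<and>
     (\<lambda>ys. path_weight (jump_prob S q) (x # ys @ [x]) *
            sum_list (map (\<lambda>z. 1 / outrate S q z) (x # ys))) summable_on (lists (S - {x}))"

definition ergodic_ctmc :: "'s set \<Rightarrow> ('s \<Rightarrow> 's \<Rightarrow> real) \<Rightarrow> bool" where
  "ergodic_ctmc S q \<longleftrightarrow> irreducible_ctmc S q \<and> (\<forall>x\<in>S. positive_recurrent S q x)"

text \<open>States n \<in> N_0^{1..J} are represented as functions nat \<Rightarrow> nat vanishing outside {1..J}.\<close>
definition jstates :: "nat \<Rightarrow> (nat \<Rightarrow> nat) set" where
  "jstates J = {n. \<forall>j. j \<notin> {1..J} \<longrightarrow> n j = 0}"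

text \<open>Rates of a Jackson-type network with external arrival rates a i to node i,
  service intensities s j k at node j with k customers, and routing matrix rt on {0..J}.\<close>
definition jackson_q ::
  "nat \<Rightarrow> (nat \<Rightarrow> real) \<Rightarrow> (nat \<Rightarrow> nat \<Rightarrow> real) \<Rightarrow> (nat \<Rightarrow> nat \<Rightarrow> real)
     \<Rightarrow> (nat \<Rightarrow> nat) \<Rightarrow> (nat \<Rightarrow> nat) \<Rightarrow> real" where
  "jackson_q J a s rt n m =
     (\<Sum>i\<in>{1..J}. if m = n(i := n i + 1) then a i else 0)
   + (\<Sum>j\<in>{1..J}. \<Sum>i\<in>{1..J}.
        if i \<noteq> j \<and> 0 < n j \<and> m = n(j := n j - 1, i := n i + 1) then s j (n j) * rt j i else 0)
   + (\<Sum>j\<in>{1..J}. if 0 < n j \<and> m = n(j := n j - 1) then s j (n j) * rt j 0 else 0)"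

definition stochastic_on :: "nat \<Rightarrow> (nat \<Rightarrow> nat \<Rightarrow> real) \<Rightarrow> bool" where
  "stochastic_on J r \<longleftrightarrow> (\<forall>i\<in>{0..J}. \<forall>j\<in>{0..J}. 0 \<le> r i j) \<and> (\<forall>i\<in>{0..J}. (\<Sum>j\<in>{0..J}. r i j) = 1)"

definition irreducible_matrix :: "nat \<Rightarrow> (nat \<Rightarrow> nat \<Rightarrow> real) \<Rightarrow> bool" where
  "irreducible_matrix J r \<longleftrightarrow>
     (\<forall>i\<in>{0..J}. \<forall>j\<in>{0..J}. (i, j) \<in> {(a, b). a \<in> {0..J} \<and> b \<in> {0..J} \<and> 0 < r a b}\<^sup>*)"

definition invariant_measure :: "nat \<Rightarrow> (nat \<Rightarrow> nat \<Rightarrow> real) \<Rightarrow> (nat \<Rightarrow> real) \<Rightarrow> bool" where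
  "invariant_measure J r m \<longleftrightarrow> (\<forall>j\<in>{0..J}. m j = (\<Sum>i\<in>{0..J}. m i * r i j))"

definition normC :: "(nat \<Rightarrow> real) \<Rightarrow> (nat \<Rightarrow> nat \<Rightarrow> real) \<Rightarrow> nat \<Rightarrow> real" where
  "normC \<eta> \<mu> j = (\<Sum>n. \<Prod>k\<in>{1..n}. \<eta> j / \<mu> j k)"

definition node_factor :: "(nat \<Rightarrow> real) \<Rightarrow> (nat \<Rightarrow> nat \<Rightarrow> real) \<Rightarrow> nat \<Rightarrow> nat \<Rightarrow> real" where
  "node_factor \<eta> \<mu> j nj = (\<Prod>k\<in>{1..nj}. \<eta> j / \<mu> j k) / normC \<eta> \<mu> j"

definition jackson_xi :: "nat \<Rightarrow> (nat \<Rightarrow> real) \<Rightarrow> (nat \<Rightarrow> nat \<Rightarrow> real) \<Rightarrow> (nat \<Rightarrow> nat) \<Rightarrow> real" where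
  "jackson_xi J \<eta> \<mu> n = (\<Prod>j\<in>{1..J}. node_factor \<eta> \<mu> j (n j))"

definition gmax :: "nat \<Rightarrow> (nat \<Rightarrow> real) \<Rightarrow> real" where
  "gmax J \<gamma> = Max (\<gamma> ` {1..J})"

definition alpha :: "nat \<Rightarrow> (nat \<Rightarrow> real) \<Rightarrow> nat \<Rightarrow> real" where
  "alpha J \<gamma> j = (if j = 0 then 1 else if gmax J \<gamma> \<le> 1 then \<gamma> j else \<gamma> j / gmax J \<gamma>)"

definition beta :: "nat \<Rightarrow> (nat \<Rightarrow> real) \<Rightarrow> real" where
  "beta J \<gamma> = (if gmax J \<gamma> \<le> 1 then 1 else gmax J \<gamma>)"

definition Bset :: "nat \<Rightarrow> (nat \<Rightarrow> real) \<Rightarrow> nat set" where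
  "Bset J \<gamma> = {j \<in> {1..J}. \<gamma> j = 0}"

definition Wset :: "nat \<Rightarrow> (nat \<Rightarrow> real) \<Rightarrow> nat set" where
  "Wset J \<gamma> = {1..J} - Bset J \<gamma>"

definition jackson_q_gamma ::
  "nat \<Rightarrow> real \<Rightarrow> (nat \<Rightarrow> real) \<Rightarrow> (nat \<Rightarrow> nat \<Rightarrow> real) \<Rightarrow> (nat \<Rightarrow> nat \<Rightarrow> real)
     \<Rightarrow> (nat \<Rightarrow> nat) \<Rightarrow> (nat \<Rightarrow> nat) \<Rightarrow> real" where
  "jackson_q_gamma J lam \<gamma> \<mu> ra =
     jackson_q J (\<lambda>i. beta J \<gamma> * lam * ra 0 i) (\<lambda>j k. \<gamma> j * \<mu> j k) ra"

end

(*
  The rates of X^(gamma) are those of a Jackson network with external arrival rates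
  beta lambda r^(alpha)(0, i), service intensities gamma_j mu_j and routing matrix r^(alpha).
  Invariance of (alpha_j eta_j) under r^(alpha) yields the traffic equations of this network with
  throughputs gamma_j eta_j, and every product form built from the node factors of the nodes in W
  satisfies Kelly's partial balance with these throughputs, hence global balance. This gives the
  stationarity of xi and of every xi_phi. A node j with gamma_j = 0 never serves and receives no
  customers, because alpha_j eta_j = 0 forces r^(alpha)(i, j) = 0 for i = 0 and for all i in W;
  so its queue length is frozen, which yields the closed classes. If no node is blocked and r^(alpha) is
  irreducible, customers can be moved in and out along routing paths, so X^(gamma) is irreducible;
  positive recurrence follows from the general fact that a state of positive mass under a
  stationary distribution with summable flux is positive recurrent, proved by an invariance
  argument for the taboo kernel of the jump chain.
*)
theory Submission
  imports Defs
begin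

section \<open>Infinite sums\<close>

lemma has_sum_diff:
  fixes f g :: "'a \<Rightarrow> real"
  assumes "(f has_sum a) A" "(g has_sum b) A"
  shows "((\<lambda>x. f x - g x) has_sum (a - b)) A"
proof -
  have "((\<lambda>x. - g x) has_sum (- b)) A" using assms(2) by (simp add: has_sum_uminus)
  from has_sum_add[OF assms(1) this] show ?thesis by simp
qed

lemma has_sum_sum:
  fixes f :: "'i \<Rightarrow> 'a \<Rightarrow> real"
  assumes "finite I" "\<And>i. i \<in> I \<Longrightarrow> (f i has_sum s i) A"
  shows "((\<lambda>x. \<Sum>i\<in>I. f i x) has_sum (\<Sum>i\<in>I. s i)) A"
  using assms
proof (induction I rule: finite_induct)
  case (insert i I)
  have "((\<lambda>x. f i x + (\<Sum>i\<in>I. f i x)) has_sum (s i + (\<Sum>i\<in>I. s i))) A"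
    by (rule has_sum_add) (use insert in auto)
  then show ?case using insert by simp
qed simp

lemma has_sum_if_unique:
  fixes g :: "'a \<Rightarrow> real"
  assumes "\<And>m. P m \<longleftrightarrow> Q \<and> m = t" and "Q \<Longrightarrow> t \<in> A"
  shows "((\<lambda>m. if P m then g m else 0) has_sum (if Q then g t else 0)) A"
proof (cases Q)
  case True
  then have "((\<lambda>m. if P m then g m else 0) has_sum g t) A"
    by (intro has_sum_finite_neutralI[of "{t}"]) (use assms in auto)
  then show ?thesis using True by simp
qed (use assms in simp)

lemma has_sum_Diff_point:
  fixes f :: "'a \<Rightarrow> real"
  assumes "(f has_sum a) A" "x \<in> A"
  shows "(f has_sum (a - f x)) (A - {x})"
  using has_sum_Diff[OF assms(1) has_sum_finiteI[of "{x}" "f x"]] assms(2) by simp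

lemma has_sum_insert_zero:
  fixes f :: "'a \<Rightarrow> real"
  assumes "(f has_sum a) (A - {x})" "f x = 0"
  shows "(f has_sum a) A"
  using assms has_sum_cong_neutral[of "A - {x}" A f f a] by auto

lemma has_sum_lists_by_length:
  fixes f :: "'a list \<Rightarrow> real"
  assumes fin: "\<And>n. finite (Q n)" and sub: "\<And>n. Q n \<subseteq> {ys\<in>A. length ys = n}"
    and zero: "\<And>ys. ys \<in> A \<Longrightarrow> ys \<notin> Q (length ys) \<Longrightarrow> f ys = 0"
    and nonneg: "\<And>ys. ys \<in> A \<Longrightarrow> 0 \<le> f ys"
    and sums: "(\<lambda>n. sum f (Q n)) sums s"
  shows "(f has_sum s) A"
proof -
  define U where "U = (\<Union>n. Q n)"
  have "U \<subseteq> A" using sub by (auto simp: U_def)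
  have on_U: "(f has_sum s) U \<longleftrightarrow> (f has_sum s) A"
    by (rule has_sum_cong_neutral) (use \<open>U \<subseteq> A\<close> zero in \<open>auto simp: U_def\<close>)
  have bij: "bij_betw snd (Sigma UNIV Q) U"
  proof (rule bij_betw_imageI)
    show "inj_on snd (Sigma UNIV Q)"
      using sub by (auto simp: inj_on_def subset_iff)
  qed (force simp: U_def)
  have inner: "((\<lambda>ys. f (snd (n, ys))) has_sum sum f (Q n)) (Q n)" for n
    using fin by (simp add: has_sum_finiteI)
  have outer: "((\<lambda>n. sum f (Q n)) has_sum s) UNIV"
    by (rule sums_nonneg_imp_has_sum[OF sums]) (use sub nonneg in \<open>auto intro: sum_nonneg\<close>)
  have "(\<lambda>p. f (snd p)) summable_on Sigma UNIV Q"
    by (rule summable_on_SigmaI[OF inner has_sum_imp_summable[OF outer]])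
       (use sub nonneg in \<open>auto simp: subset_iff\<close>)
  then have "((\<lambda>p. f (snd p)) has_sum s) (Sigma UNIV Q)"
    by (rule has_sum_SigmaI[OF inner outer])
  then have "(f has_sum s) U"
    using has_sum_reindex_bij_betw[OF bij, of f s] by simp
  then show ?thesis using on_U by simp
qed

section \<open>Positive recurrence from a summable stationary measure\<close>

locale ctmc_stationary =
  fixes S :: "'s set" and q :: "'s \<Rightarrow> 's \<Rightarrow> real" and \<pi> :: "'s \<Rightarrow> real"
  assumes q_nonneg: "\<And>z y. z \<in> S \<Longrightarrow> y \<in> S \<Longrightarrow> 0 \<le> q z y"
    and q_diag: "\<And>z. z \<in> S \<Longrightarrow> q z z = 0"
    and finite_successors: "\<And>z. z \<in> S \<Longrightarrow> finite {y\<in>S. q z y \<noteq> 0}"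
    and outrate_pos: "\<And>z. z \<in> S \<Longrightarrow> 0 < outrate S q z"
    and \<pi>_nonneg: "\<And>z. z \<in> S \<Longrightarrow> 0 \<le> \<pi> z"
    and balance: "\<And>y. y \<in> S \<Longrightarrow> ((\<lambda>z. \<pi> z * q z y) has_sum (\<pi> y * outrate S q y)) (S - {y})"
    and flux_summable: "(\<lambda>z. \<pi> z * outrate S q z) summable_on S"
    and \<pi>_summable: "\<pi> summable_on S"
begin

abbreviation out where "out z \<equiv> outrate S q z"
abbreviation P where "P \<equiv> jump_prob S q"

definition succs where "succs z = {y\<in>S. q z y \<noteq> 0}"

text \<open>\<open>flux\<close> is the invariant measure of the jump chain.\<close>
definition flux where "flux z = \<pi> z * out z"

lemma succs_subset: "z \<in> S \<Longrightarrow> succs z \<subseteq> S - {z}"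
  using q_diag by (auto simp: succs_def)

lemma finite_succs: "z \<in> S \<Longrightarrow> finite (succs z)"
  using finite_successors by (simp add: succs_def)

lemma out_eq_sum_succs: "z \<in> S \<Longrightarrow> out z = (\<Sum>y\<in>succs z. q z y)"
  unfolding outrate_def
  by (intro infsumI has_sum_finite_neutralI)
     (use finite_succs succs_subset in \<open>auto simp: succs_def\<close>)

lemma P_nonneg: "z \<in> S \<Longrightarrow> y \<in> S \<Longrightarrow> 0 \<le> P z y"
  unfolding jump_prob_def by (intro divide_nonneg_pos q_nonneg outrate_pos)

lemma sum_succs_P: "z \<in> S \<Longrightarrow> (\<Sum>y\<in>succs z. P z y) = 1"
  using outrate_pos[of z] out_eq_sum_succs[of z]
  by (simp add: jump_prob_def sum_divide_distrib[symmetric])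

lemma P_eq_0: "z \<in> S \<Longrightarrow> y \<in> S \<Longrightarrow> y \<notin> succs z \<Longrightarrow> P z y = 0"
  by (simp add: succs_def jump_prob_def)

lemma flux_mult_P: "z \<in> S \<Longrightarrow> flux z * P z y = \<pi> z * q z y"
  using outrate_pos[of z] by (simp add: flux_def jump_prob_def)

lemma flux_nonneg: "z \<in> S \<Longrightarrow> 0 \<le> flux z"
  unfolding flux_def by (intro mult_nonneg_nonneg \<pi>_nonneg less_imp_le[OF outrate_pos])

text \<open>One step of the jump chain with taboo state \<open>x\<close>: paths entering \<open>x\<close> are killed.\<close>
definition taboo :: "'s \<Rightarrow> ('s \<Rightarrow> real) \<Rightarrow> 's \<Rightarrow> real" where
  "taboo x h z = (\<Sum>y\<in>succs z - {x}. P z y * h y)"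

lemma succs_taboo_subset: "z \<in> S \<Longrightarrow> y \<in> succs z - {x} \<Longrightarrow> y \<in> S - {x}"
  using succs_subset by auto

lemma taboo_nonneg: "z \<in> S \<Longrightarrow> (\<And>y. y \<in> S - {x} \<Longrightarrow> 0 \<le> h y) \<Longrightarrow> 0 \<le> taboo x h z"
  unfolding taboo_def using succs_taboo_subset P_nonneg
  by (intro sum_nonneg mult_nonneg_nonneg) auto

lemma taboo_mono: "z \<in> S \<Longrightarrow> (\<And>y. y \<in> S - {x} \<Longrightarrow> h y \<le> g y) \<Longrightarrow> taboo x h z \<le> taboo x g z"
  unfolding taboo_def using succs_taboo_subset P_nonneg
  by (intro sum_mono mult_left_mono) auto

lemma taboo_cong: "z \<in> S \<Longrightarrow> (\<And>y. y \<in> S - {x} \<Longrightarrow> h y = g y) \<Longrightarrow> taboo x h z = taboo x g z"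
  unfolding taboo_def using succs_taboo_subset by (intro sum.cong) auto

lemma taboo_add: "taboo x (\<lambda>y. h y + g y) z = taboo x h z + taboo x g z"
  unfolding taboo_def by (simp add: distrib_left sum.distrib)

lemma taboo_sum: "taboo x (\<lambda>y. \<Sum>i\<in>I. g i y) z = (\<Sum>i\<in>I. taboo x (g i) z)"
  unfolding taboo_def by (simp add: sum_distrib_left sum.swap[of _ I])

lemma taboo_one_add_P: "z \<in> S \<Longrightarrow> x \<in> S \<Longrightarrow> taboo x (\<lambda>_. 1) z + P z x = 1"
proof (cases "x \<in> succs z")
  case True
  assume z: "z \<in> S"
  then show ?thesis
    using True sum_succs_P[OF z] by (simp add: taboo_def sum.remove[OF finite_succs[OF z] True])
qed (use sum_succs_P P_eq_0 in \<open>simp add: taboo_def\<close>)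

lemma taboo_le_1: "z \<in> S \<Longrightarrow> x \<in> S \<Longrightarrow> (\<And>y. y \<in> S - {x} \<Longrightarrow> h y \<le> 1) \<Longrightarrow> taboo x h z \<le> 1"
  using taboo_mono[of z x h "\<lambda>_. 1"] taboo_one_add_P[of z x] P_nonneg[of z x] by fastforce

text \<open>Since \<open>flux\<close> is invariant for the jump chain, a taboo step changes the flux-mass of \<open>h\<close> on
  \<open>S - {x}\<close> only by the mass that the excluded state \<open>x\<close> itself feeds into \<open>S - {x}\<close>.\<close>
lemma flux_taboo_has_sum:
  assumes x: "x \<in> S" and h_nonneg: "\<And>y. y \<in> S - {x} \<Longrightarrow> 0 \<le> h y"
    and h_sum: "((\<lambda>y. flux y * h y) has_sum L) (S - {x})"
  shows "((\<lambda>z. flux z * taboo x h z) has_sum (L - flux x * taboo x h x)) (S - {x})"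
proof -
  define T where "T = S - {x}"
  have balance_T: "((\<lambda>z. \<pi> z * q z y) has_sum (flux y - \<pi> x * q x y)) T" if y: "y \<in> T" for y
  proof -
    have yS: "y \<in> S" using y by (simp add: T_def)
    have "((\<lambda>z. \<pi> z * q z y) has_sum flux y) S"
      by (rule has_sum_insert_zero[where x = y]) (use balance[OF yS] q_diag[OF yS] in \<open>simp_all add: flux_def\<close>)
    from has_sum_Diff_point[OF this x] show ?thesis by (simp add: T_def)
  qed
  have inner: "((\<lambda>z. \<pi> z * q z y * h y) has_sum (h y * (flux y - \<pi> x * q x y))) T" if "y \<in> T" for y
    using has_sum_cmult_left[OF balance_T[OF that], of "h y"] by (simp add: mult.commute)
  have from_x: "((\<lambda>y. h y * (\<pi> x * q x y)) has_sum (flux x * taboo x h x)) T"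
  proof (rule has_sum_finite_neutralI[of "succs x - {x}"])
    show "flux x * taboo x h x = (\<Sum>y\<in>succs x - {x}. h y * (\<pi> x * q x y))"
      unfolding taboo_def sum_distrib_left
      by (rule sum.cong) (use flux_mult_P[OF x] in \<open>auto simp: algebra_simps\<close>)
  qed (use finite_succs[OF x] succs_subset[OF x] in \<open>auto simp: T_def succs_def\<close>)
  have outer: "((\<lambda>y. h y * (flux y - \<pi> x * q x y)) has_sum (L - flux x * taboo x h x)) T"
    using has_sum_diff[OF h_sum[folded T_def] from_x] by (simp add: algebra_simps)
  have "(\<lambda>(y, z). \<pi> z * q z y * h y) summable_on Sigma T (\<lambda>_. T)"
    by (rule summable_on_SigmaI[where g = "\<lambda>y. h y * (flux y - \<pi> x * q x y)"])
       (use inner has_sum_imp_summable[OF outer] \<pi>_nonneg q_nonneg h_nonneg in \<open>auto simp: T_def\<close>)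
  then have "((\<lambda>(y, z). \<pi> z * q z y * h y) has_sum (L - flux x * taboo x h x)) (Sigma T (\<lambda>_. T))"
    by (intro has_sum_SigmaI[OF _ outer]) (use inner in auto)
  then have "((\<lambda>(y, z). \<pi> z * q z y * h y) has_sum (L - flux x * taboo x h x)) (T \<times> T)"
    by simp
  from has_sum_swap[THEN iffD1, OF this]
  have swapped: "((\<lambda>(z, y). \<pi> z * q z y * h y) has_sum (L - flux x * taboo x h x)) (T \<times> T)"
    by (simp add: split_beta)
  have inner': "((\<lambda>y. \<pi> z * q z y * h y) has_sum (flux z * taboo x h z)) T" if z: "z \<in> T" for z
  proof -
    have zS: "z \<in> S" using z by (simp add: T_def)
    show ?thesis
    proof (rule has_sum_finite_neutralI[of "succs z - {x}"])
      show "flux z * taboo x h z = (\<Sum>y\<in>succs z - {x}. \<pi> z * q z y * h y)"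
        unfolding taboo_def sum_distrib_left
        by (rule sum.cong) (use flux_mult_P[OF zS] in \<open>auto simp: algebra_simps\<close>)
    qed (use finite_succs[OF zS] succs_subset[OF zS] in \<open>auto simp: T_def succs_def\<close>)
  qed
  have "((\<lambda>z. flux z * taboo x h z) has_sum (L - flux x * taboo x h x)) T"
    by (rule has_sum_Sigma'[OF swapped]) (use inner' in auto)
  then show ?thesis by (simp add: T_def)
qed

text \<open>Probability of avoiding \<open>x\<close> during the first \<open>n\<close> jumps, of hitting \<open>x\<close> first at jump
  \<open>n + 1\<close>, and expected holding time after \<open>n\<close> jumps on paths still avoiding \<open>x\<close>.\<close>
fun avoid :: "'s \<Rightarrow> nat \<Rightarrow> 's \<Rightarrow> real" where
  "avoid x 0 = (\<lambda>z. 1)"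
| "avoid x (Suc n) = taboo x (avoid x n)"

fun first_hit :: "'s \<Rightarrow> nat \<Rightarrow> 's \<Rightarrow> real" where
  "first_hit x 0 = (\<lambda>z. P z x)"
| "first_hit x (Suc n) = taboo x (first_hit x n)"

fun taboo_holding :: "'s \<Rightarrow> nat \<Rightarrow> 's \<Rightarrow> real" where
  "taboo_holding x 0 = (\<lambda>z. 1 / out z)"
| "taboo_holding x (Suc n) = taboo x (taboo_holding x n)"

lemma avoid_bounds: "x \<in> S \<Longrightarrow> z \<in> S \<Longrightarrow> 0 \<le> avoid x n z \<and> avoid x n z \<le> 1"
  by (induction n arbitrary: z) (auto intro: taboo_nonneg taboo_le_1)

lemma first_hit_nonneg: "x \<in> S \<Longrightarrow> z \<in> S \<Longrightarrow> 0 \<le> first_hit x n z"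
  by (induction n arbitrary: z) (auto intro: taboo_nonneg P_nonneg)

lemma taboo_holding_nonneg: "z \<in> S \<Longrightarrow> 0 \<le> taboo_holding x n z"
  by (induction n arbitrary: z) (auto intro: taboo_nonneg less_imp_le[OF outrate_pos])

lemma avoid_Suc_add_first_hit: "x \<in> S \<Longrightarrow> z \<in> S \<Longrightarrow> avoid x (Suc n) z + first_hit x n z = avoid x n z"
proof (induction n arbitrary: z)
  case 0 then show ?case using taboo_one_add_P by simp
next
  case (Suc n)
  have "avoid x (Suc n) z = taboo x (\<lambda>y. avoid x (Suc n) y + first_hit x n y) z"
    by (simp, rule taboo_cong) (use Suc in auto)
  then show ?case by (simp add: taboo_add)
qed

lemma sum_first_hit: "x \<in> S \<Longrightarrow> z \<in> S \<Longrightarrow> (\<Sum>k<N. first_hit x k z) = 1 - avoid x N z"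
proof (induction N)
  case (Suc N) then show ?case using avoid_Suc_add_first_hit[of x z N] by simp
qed simp

lemma sum_first_hit_le_1: "x \<in> S \<Longrightarrow> z \<in> S \<Longrightarrow> (\<Sum>k<N. first_hit x k z) \<le> 1"
  using sum_first_hit avoid_bounds by fastforce

lemma flux_avoid_has_sum:
  assumes x: "x \<in> S"
  shows "((\<lambda>z. flux z * avoid x N z) has_sum
           (infsum flux (S - {x}) - flux x * (\<Sum>k\<in>{1..N}. avoid x k x))) (S - {x})"
proof (induction N)
  case 0
  have "flux summable_on S"
    using flux_summable by (simp add: flux_def[abs_def])
  then have "flux summable_on (S - {x})"
    by (rule summable_on_subset_banach) auto
  then show ?case by simp
next
  case (Suc N)
  show ?case
    using flux_taboo_has_sum[OF x _ Suc.IH] avoid_bounds[OF x]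
    by (simp add: algebra_simps)
qed

lemma flux_taboo_holding_has_sum:
  assumes x: "x \<in> S"
  shows "((\<lambda>z. flux z * taboo_holding x N z) has_sum
           (infsum \<pi> (S - {x}) - flux x * (\<Sum>k\<in>{1..N}. taboo_holding x k x))) (S - {x})"
proof (induction N)
  case 0
  have "\<pi> summable_on (S - {x})"
    using \<pi>_summable by (rule summable_on_subset_banach) auto
  moreover have "flux z * taboo_holding x 0 z = \<pi> z" if "z \<in> S - {x}" for z
    using outrate_pos[of z] that by (simp add: flux_def)
  ultimately show ?case
    using has_sum_cong[of "S - {x}" "\<lambda>z. flux z * taboo_holding x 0 z" \<pi>] by simp
next
  case (Suc N)
  show ?case
    using flux_taboo_has_sum[OF x _ Suc.IH] taboo_holding_nonneg
    by (simp add: algebra_simps)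
qed

lemma flux_sum_avoid_le: "x \<in> S \<Longrightarrow> flux x * (\<Sum>k\<in>{1..N}. avoid x k x) \<le> infsum flux (S - {x})"
  using has_sum_nonneg[OF flux_avoid_has_sum] flux_nonneg avoid_bounds
  by (metis (no_types, lifting) Diff_iff diff_ge_0_iff_ge mult_nonneg_nonneg)

lemma flux_sum_taboo_holding_le:
  "x \<in> S \<Longrightarrow> flux x * (\<Sum>k\<in>{1..N}. taboo_holding x k x) \<le> infsum \<pi> (S - {x})"
  using has_sum_nonneg[OF flux_taboo_holding_has_sum] flux_nonneg taboo_holding_nonneg
  by (metis (no_types, lifting) Diff_iff diff_ge_0_iff_ge mult_nonneg_nonneg)

text \<open>Since \<open>avoid x n x\<close> decreases in \<open>n\<close> and its partial sums are bounded, it is \<open>O(1/n)\<close>.\<close>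
lemma avoid_tendsto_0:
  assumes x: "x \<in> S" and \<pi>x: "0 < \<pi> x"
  shows "(\<lambda>N. avoid x N x) \<longlonglongrightarrow> 0"
proof (rule real_tendsto_sandwich[where f = "\<lambda>_. 0" and h = "\<lambda>N. (infsum flux (S - {x}) / flux x) / real N"])
  have flux_x: "0 < flux x" using \<pi>x outrate_pos[OF x] by (simp add: flux_def)
  have dec: "decseq (\<lambda>n. avoid x n x)"
    using avoid_Suc_add_first_hit[OF x x] first_hit_nonneg[OF x x]
    by (intro decseq_SucI) (metis le_add_same_cancel1)
  have bound: "avoid x N x \<le> (infsum flux (S - {x}) / flux x) / real N" if "N \<ge> 1" for N
  proof -
    have "real N * avoid x N x = (\<Sum>k\<in>{1..N}. avoid x N x)" by simp
    also have "\<dots> \<le> (\<Sum>k\<in>{1..N}. avoid x k x)"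
      by (rule sum_mono) (use decseqD[OF dec] in auto)
    also have "\<dots> \<le> infsum flux (S - {x}) / flux x"
      using flux_sum_avoid_le[OF x, of N] flux_x by (simp add: field_simps)
    finally show ?thesis using that flux_x by (simp add: field_simps)
  qed
  show "\<forall>\<^sub>F n in sequentially. avoid x n x \<le> infsum flux (S - {x}) / flux x / real n"
    using eventually_ge_at_top[of 1] by (rule eventually_mono) (rule bound)
  show "\<forall>\<^sub>F n in sequentially. 0 \<le> avoid x n x" using avoid_bounds x by auto
  show "(\<lambda>n. infsum flux (S - {x}) / flux x / real n) \<longlonglongrightarrow> 0" by (rule lim_const_over_n)
qed simp

lemma first_hit_sums_1:
  assumes x: "x \<in> S" and \<pi>x: "0 < \<pi> x"
  shows "(\<lambda>n. first_hit x n x) sums 1"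
proof -
  have "(\<lambda>N. 1 - avoid x N x) \<longlonglongrightarrow> 1 - 0"
    by (intro tendsto_diff tendsto_const avoid_tendsto_0[OF x \<pi>x])
  then show ?thesis unfolding sums_def using sum_first_hit[OF x x] by simp
qed

text \<open>Lists of intermediate states of jump-chain paths of length \<open>n + 1\<close> from \<open>z\<close> to \<open>x\<close> that avoid
  \<open>x\<close> in between and have positive weight.\<close>
fun taboo_paths :: "'s \<Rightarrow> 's \<Rightarrow> nat \<Rightarrow> 's list set" where
  "taboo_paths x z 0 = {[]}"
| "taboo_paths x z (Suc n) = (\<Union>y\<in>succs z - {x}. (#) y ` taboo_paths x y n)"

lemma finite_taboo_paths: "z \<in> S \<Longrightarrow> finite (taboo_paths x z n)"
proof (induction n arbitrary: z)
  case (Suc n)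
  then show ?case using finite_succs[OF Suc.prems] succs_taboo_subset[OF Suc.prems] by auto
qed simp

lemma taboo_paths_subset:
  "z \<in> S \<Longrightarrow> ys \<in> taboo_paths x z n \<Longrightarrow> length ys = n \<and> ys \<in> lists (S - {x})"
proof (induction n arbitrary: z ys)
  case (Suc n)
  then obtain y r where "y \<in> succs z - {x}" "r \<in> taboo_paths x y n" "ys = y # r" by auto
  then show ?case using Suc.IH succs_taboo_subset[OF Suc.prems(1)] by force
qed simp

lemma path_weight_nonneg: "set l \<subseteq> S \<Longrightarrow> 0 \<le> path_weight P l"
  by (induction l rule: induct_list012) (auto intro!: mult_nonneg_nonneg P_nonneg)

lemma path_weight_notin_taboo_paths:
  "z \<in> S \<Longrightarrow> ys \<in> lists (S - {x}) \<Longrightarrow> ys \<notin> taboo_paths x z (length ys)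
    \<Longrightarrow> path_weight P (z # ys @ [x]) = 0"
proof (induction ys arbitrary: z)
  case (Cons y r)
  show ?case
  proof (cases "y \<in> succs z")
    case True
    then show ?thesis using Cons by auto
  next
    case False
    then show ?thesis using P_eq_0 Cons.prems by auto
  qed
qed simp

lemma sum_taboo_paths_Suc:
  assumes z: "z \<in> S"
  shows "(\<Sum>ys\<in>taboo_paths x z (Suc n). g ys) = (\<Sum>y\<in>succs z - {x}. \<Sum>r\<in>taboo_paths x y n. g (y # r))"
proof -
  have "(\<Sum>ys\<in>taboo_paths x z (Suc n). g ys)
      = (\<Sum>y\<in>succs z - {x}. \<Sum>ys\<in>(#) y ` taboo_paths x y n. g ys)"
    unfolding taboo_paths.simps
    by (rule sum.UNION_disjoint)
       (use finite_succs[OF z] succs_taboo_subset[OF z] finite_taboo_paths in auto)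
  also have "\<dots> = (\<Sum>y\<in>succs z - {x}. \<Sum>r\<in>taboo_paths x y n. g (y # r))"
    by (rule sum.cong[OF refl], subst sum.reindex) auto
  finally show ?thesis .
qed

lemma sum_taboo_paths_eq_first_hit:
  "z \<in> S \<Longrightarrow> (\<Sum>ys\<in>taboo_paths x z n. path_weight P (z # ys @ [x])) = first_hit x n z"
proof (induction n arbitrary: z)
  case (Suc n)
  have "(\<Sum>ys\<in>taboo_paths x z (Suc n). path_weight P (z # ys @ [x]))
      = (\<Sum>y\<in>succs z - {x}. \<Sum>r\<in>taboo_paths x y n. P z y * path_weight P (y # r @ [x]))"
    by (subst sum_taboo_paths_Suc[OF Suc.prems]) simp
  also have "\<dots> = taboo x (first_hit x n) z"
    unfolding taboo_def
  proof (rule sum.cong[OF refl])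
    fix y assume "y \<in> succs z - {x}"
    then have "y \<in> S" using succs_taboo_subset[OF Suc.prems] by auto
    then show "(\<Sum>r\<in>taboo_paths x y n. P z y * path_weight P (y # r @ [x])) = P z y * first_hit x n y"
      by (simp add: sum_distrib_left[symmetric] Suc.IH)
  qed
  finally show ?case by simp
qed simp

definition holding_time :: "'s list \<Rightarrow> real" where
  "holding_time l = sum_list (map (\<lambda>z. 1 / out z) l)"

text \<open>Contribution of the returns at jump \<open>n + 1\<close> to the expected hitting time of \<open>x\<close> from \<open>z\<close>.\<close>
definition hit_time_part :: "'s \<Rightarrow> nat \<Rightarrow> 's \<Rightarrow> real" where
  "hit_time_part x n z =
     (\<Sum>ys\<in>taboo_paths x z n. path_weight P (z # ys @ [x]) * holding_time (z # ys))"

lemma holding_time_nonneg: "set l \<subseteq> S \<Longrightarrow> 0 \<le> holding_time l"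
  unfolding holding_time_def using outrate_pos
  by (intro sum_list_nonneg) (auto simp: less_imp_le)

lemma hit_time_part_nonneg: "x \<in> S \<Longrightarrow> z \<in> S \<Longrightarrow> 0 \<le> hit_time_part x n z"
  unfolding hit_time_part_def using taboo_paths_subset[of z _ x n]
  by (intro sum_nonneg mult_nonneg_nonneg path_weight_nonneg holding_time_nonneg) auto

lemma hit_time_part_0: "hit_time_part x 0 z = first_hit x 0 z / out z"
  by (simp add: hit_time_part_def holding_time_def)

lemma hit_time_part_Suc:
  assumes z: "z \<in> S"
  shows "hit_time_part x (Suc n) z = first_hit x (Suc n) z / out z + taboo x (hit_time_part x n) z"
proof -
  have "hit_time_part x (Suc n) z = (\<Sum>y\<in>succs z - {x}. \<Sum>r\<in>taboo_paths x y n.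
          P z y * path_weight P (y # r @ [x]) * (1 / out z + holding_time (y # r)))"
    unfolding hit_time_part_def by (subst sum_taboo_paths_Suc[OF z]) (simp add: holding_time_def)
  also have "\<dots> = (\<Sum>y\<in>succs z - {x}.
      P z y * (\<Sum>r\<in>taboo_paths x y n. path_weight P (y # r @ [x])) / out z + P z y * hit_time_part x n y)"
    unfolding hit_time_part_def sum_distrib_left sum_divide_distrib sum.distrib[symmetric]
    by (intro sum.cong refl) (simp add: algebra_simps)
  also have "\<dots> = (\<Sum>y\<in>succs z - {x}. P z y * first_hit x n y / out z + P z y * hit_time_part x n y)"
  proof (rule sum.cong[OF refl])
    fix y assume "y \<in> succs z - {x}"
    then have "y \<in> S" using succs_taboo_subset[OF z] by blast
    then show "P z y * (\<Sum>r\<in>taboo_paths x y n. path_weight P (y # r @ [x])) / out z + P z y * hit_time_part x n y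
        = P z y * first_hit x n y / out z + P z y * hit_time_part x n y"
      by (simp add: sum_taboo_paths_eq_first_hit)
  qed
  finally show ?thesis by (simp add: taboo_def sum.distrib sum_divide_distrib)
qed

lemma sum_hit_time_part_le:
  "x \<in> S \<Longrightarrow> z \<in> S \<Longrightarrow> (\<Sum>n<N. hit_time_part x n z) \<le> (\<Sum>k<N. taboo_holding x k z)"
proof (induction N arbitrary: z)
  case (Suc N)
  have "(\<Sum>n<Suc N. hit_time_part x n z)
      = (\<Sum>n<Suc N. first_hit x n z) / out z + taboo x (\<lambda>y. \<Sum>n<N. hit_time_part x n y) z"
    unfolding sum.lessThan_Suc_shift[of "\<lambda>n. hit_time_part x n z"] sum.lessThan_Suc_shift[of "\<lambda>n. first_hit x n z"]
    using Suc.prems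
    by (simp add: hit_time_part_0 hit_time_part_Suc sum.distrib taboo_sum add_divide_distrib sum_divide_distrib
        del: first_hit.simps)
  also have "\<dots> \<le> 1 / out z + taboo x (\<lambda>y. \<Sum>k<N. taboo_holding x k y) z"
  proof (rule add_mono)
    show "(\<Sum>n<Suc N. first_hit x n z) / out z \<le> 1 / out z"
      by (rule divide_right_mono[OF sum_first_hit_le_1[OF Suc.prems]])
         (use outrate_pos[OF Suc.prems(2)] in simp)
    show "taboo x (\<lambda>y. \<Sum>n<N. hit_time_part x n y) z \<le> taboo x (\<lambda>y. \<Sum>k<N. taboo_holding x k y) z"
      by (rule taboo_mono[OF Suc.prems(2)]) (use Suc.IH Suc.prems in auto)
  qed
  also have "\<dots> = (\<Sum>k<Suc N. taboo_holding x k z)"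
    unfolding sum.lessThan_Suc_shift[of "\<lambda>k. taboo_holding x k z"] by (simp add: taboo_sum)
  finally show ?case .
qed simp

theorem positive_recurrent_if_pos:
  assumes x: "x \<in> S" and \<pi>x: "0 < \<pi> x"
  shows "positive_recurrent S q x"
  unfolding positive_recurrent_def
proof (intro conjI)
  show "0 < out x" by (rule outrate_pos[OF x])
  have nonneg: "0 \<le> path_weight P (x # ys @ [x])" if "ys \<in> lists (S - {x})" for ys
    using that x by (intro path_weight_nonneg) auto
  note by_length = has_sum_lists_by_length[where Q = "taboo_paths x x" and A = "lists (S - {x})",
      OF finite_taboo_paths[OF x]]
  show "((\<lambda>ys. path_weight P (x # ys @ [x])) has_sum 1) (lists (S - {x}))"
  proof (rule by_length)
    show "(\<lambda>n. \<Sum>ys\<in>taboo_paths x x n. path_weight P (x # ys @ [x])) sums 1"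
      using first_hit_sums_1[OF x \<pi>x] by (simp add: sum_taboo_paths_eq_first_hit[OF x])
  qed (use taboo_paths_subset[OF x] path_weight_notin_taboo_paths[OF x] nonneg in auto)
  have flux_x: "0 < flux x" using \<pi>x outrate_pos[OF x] by (simp add: flux_def)
  have "(\<Sum>n<N. hit_time_part x n x) \<le> taboo_holding x 0 x + infsum \<pi> (S - {x}) / flux x" for N
  proof -
    have "(\<Sum>n<N. hit_time_part x n x) \<le> (\<Sum>k<Suc N. taboo_holding x k x)"
      using sum_hit_time_part_le[OF x x, of N] taboo_holding_nonneg[OF x, of x N] by simp
    also have "\<dots> = taboo_holding x 0 x + (\<Sum>k\<in>{1..N}. taboo_holding x k x)"
      unfolding sum.lessThan_Suc_shift[of "\<lambda>k. taboo_holding x k x"] by (simp add: sum.atLeast1_atMost_eq)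
    also have "\<dots> \<le> taboo_holding x 0 x + infsum \<pi> (S - {x}) / flux x"
      using flux_sum_taboo_holding_le[OF x, of N] flux_x by (simp add: field_simps del: taboo_holding.simps)
    finally show ?thesis .
  qed
  then have "summable (\<lambda>n. hit_time_part x n x)"
    by (rule summableI_nonneg_bounded[OF hit_time_part_nonneg[OF x x]])
  then have "(\<lambda>n. hit_time_part x n x) sums (\<Sum>n. hit_time_part x n x)"
    by (rule summable_sums)
  then have "((\<lambda>ys. path_weight P (x # ys @ [x]) * holding_time (x # ys)) has_sum
              (\<Sum>n. hit_time_part x n x)) (lists (S - {x}))"
    unfolding hit_time_part_def
  proof (rule by_length[rotated 3])
    show "0 \<le> path_weight P (x # ys @ [x]) * holding_time (x # ys)" if "ys \<in> lists (S - {x})" for ys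
      using nonneg[OF that] that x by (intro mult_nonneg_nonneg holding_time_nonneg) auto
  qed (use taboo_paths_subset[OF x] path_weight_notin_taboo_paths[OF x] in auto)
  then show "(\<lambda>ys. path_weight P (x # ys @ [x]) * sum_list (map (\<lambda>z. 1 / out z) (x # ys)))
               summable_on lists (S - {x})"
    unfolding holding_time_def by (rule has_sum_imp_summable)
qed

end

section \<open>Jackson-type rate functions\<close>

lemma fun_upd_in_jstates: "n \<in> jstates J \<Longrightarrow> i \<in> {1..J} \<Longrightarrow> n(i := v) \<in> jstates J"
  by (auto simp: jstates_def)

lemma fun_upd_neq: "b \<noteq> n i \<Longrightarrow> f(i := b) \<noteq> n"
  by (metis fun_upd_same)

lemma eq_fun_upd_Suc_iff:
  fixes x m :: "nat \<Rightarrow> nat"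
  shows "x = m(i := m i + 1) \<longleftrightarrow> 0 < x i \<and> m = x(i := x i - 1)"
  by (auto simp: fun_eq_iff)

lemma eq_fun_upd_move_iff:
  fixes x m :: "nat \<Rightarrow> nat"
  assumes "i \<noteq> j"
  shows "0 < m j \<and> x = m(j := m j - 1, i := m i + 1) \<longleftrightarrow> 0 < x i \<and> m = x(i := x i - 1, j := x j + 1)"
  using assms by (auto simp: fun_eq_iff)

lemma eq_fun_upd_pred_iff:
  fixes x m :: "nat \<Rightarrow> nat"
  shows "0 < m j \<and> x = m(j := m j - 1) \<longleftrightarrow> m = x(j := x j + 1)"
  by (auto simp: fun_eq_iff)

definition jackson_outflow ::
  "nat \<Rightarrow> (nat \<Rightarrow> real) \<Rightarrow> (nat \<Rightarrow> nat \<Rightarrow> real) \<Rightarrow> (nat \<Rightarrow> nat \<Rightarrow> real) \<Rightarrow> (nat \<Rightarrow> nat) \<Rightarrow> real" where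
  "jackson_outflow J a s rt n = (\<Sum>i\<in>{1..J}. a i)
     + (\<Sum>j\<in>{1..J}. \<Sum>i\<in>{1..J}. if i \<noteq> j \<and> 0 < n j then s j (n j) * rt j i else 0)
     + (\<Sum>j\<in>{1..J}. if 0 < n j then s j (n j) * rt j 0 else 0)"

definition jackson_inflow ::
  "nat \<Rightarrow> (nat \<Rightarrow> real) \<Rightarrow> (nat \<Rightarrow> nat \<Rightarrow> real) \<Rightarrow> (nat \<Rightarrow> nat \<Rightarrow> real)
     \<Rightarrow> ((nat \<Rightarrow> nat) \<Rightarrow> real) \<Rightarrow> (nat \<Rightarrow> nat) \<Rightarrow> real" where
  "jackson_inflow J a s rt p x = (\<Sum>i\<in>{1..J}. if 0 < x i then p (x(i := x i - 1)) * a i else 0)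
     + (\<Sum>j\<in>{1..J}. \<Sum>i\<in>{1..J}. if i \<noteq> j \<and> 0 < x i
          then p (x(i := x i - 1, j := x j + 1)) * (s j (x j + 1) * rt j i) else 0)
     + (\<Sum>j\<in>{1..J}. p (x(j := x j + 1)) * (s j (x j + 1) * rt j 0))"

lemma jackson_q_diag: "jackson_q J a s rt n n = 0"
proof -
  have f1: "\<And>i. (n = n(i := n i + 1)) = False" by (metis fun_upd_neq n_not_Suc_n Suc_eq_plus1)
  moreover have f2: "\<And>i j. (i \<noteq> j \<and> 0 < n j \<and> n = n(j := n j - 1, i := n i + 1)) = False"
    by (metis fun_upd_neq n_not_Suc_n Suc_eq_plus1)
  moreover have f3: "\<And>j. (0 < n j \<and> n = n(j := n j - 1)) = False" by (metis fun_upd_neq diff_less less_irrefl zero_less_one)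
  show ?thesis unfolding jackson_q_def by (simp only: f1 f2 f3 if_False sum.neutral_const add_0)
qed

lemma jackson_q_has_sum_outflow:
  assumes n: "n \<in> jstates J"
  shows "(jackson_q J a s rt n has_sum jackson_outflow J a s rt n) (jstates J - {n})"
proof -
  let ?A = "jstates J - {n}"
  have arrivals: "((\<lambda>m. \<Sum>i\<in>{1..J}. if m = n(i := n i + 1) then a i else 0) has_sum (\<Sum>i\<in>{1..J}. a i)) ?A"
  proof (rule has_sum_sum)
    fix i :: nat assume i: "i \<in> {1..J}"
    have "n(i := n i + 1) \<noteq> n" by (rule fun_upd_neq) simp
    then have "n(i := n i + 1) \<in> ?A" using fun_upd_in_jstates[OF n i] by auto
    then show "((\<lambda>m. if m = n(i := n i + 1) then a i else 0) has_sum a i) ?A"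
      using has_sum_if_unique[of "\<lambda>m. m = n(i := n i + 1)" True _ ?A "\<lambda>_. a i"] by simp
  qed simp
  have moves: "((\<lambda>m. \<Sum>j\<in>{1..J}. \<Sum>i\<in>{1..J}.
        if i \<noteq> j \<and> 0 < n j \<and> m = n(j := n j - 1, i := n i + 1) then s j (n j) * rt j i else 0)
      has_sum (\<Sum>j\<in>{1..J}. \<Sum>i\<in>{1..J}. if i \<noteq> j \<and> 0 < n j then s j (n j) * rt j i else 0)) ?A"
  proof (rule has_sum_sum, simp, rule has_sum_sum, simp)
    fix j i :: nat assume j: "j \<in> {1..J}" and i: "i \<in> {1..J}"
    have ne: "n(j := n j - 1, i := n i + 1) \<noteq> n" by (rule fun_upd_neq) simp
    show "((\<lambda>m. if i \<noteq> j \<and> 0 < n j \<and> m = n(j := n j - 1, i := n i + 1) then s j (n j) * rt j i else 0)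
       has_sum (if i \<noteq> j \<and> 0 < n j then s j (n j) * rt j i else 0)) ?A"
      using ne has_sum_if_unique[where P = "\<lambda>m. i \<noteq> j \<and> 0 < n j \<and> m = n(j := n j - 1, i := n i + 1)"
          and Q = "i \<noteq> j \<and> 0 < n j" and t = "n(j := n j - 1, i := n i + 1)" and A = ?A
          and g = "\<lambda>_. s j (n j) * rt j i"]
        fun_upd_in_jstates[OF fun_upd_in_jstates[OF n j] i]
      by auto
  qed
  have departures: "((\<lambda>m. \<Sum>j\<in>{1..J}. if 0 < n j \<and> m = n(j := n j - 1) then s j (n j) * rt j 0 else 0)
      has_sum (\<Sum>j\<in>{1..J}. if 0 < n j then s j (n j) * rt j 0 else 0)) ?A"
  proof (rule has_sum_sum, simp)
    fix j :: nat assume j: "j \<in> {1..J}"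
    have ne: "0 < n j \<Longrightarrow> n(j := n j - 1) \<noteq> n" by (rule fun_upd_neq) simp
    show "((\<lambda>m. if 0 < n j \<and> m = n(j := n j - 1) then s j (n j) * rt j 0 else 0)
       has_sum (if 0 < n j then s j (n j) * rt j 0 else 0)) ?A"
      using ne has_sum_if_unique[where P = "\<lambda>m. 0 < n j \<and> m = n(j := n j - 1)"
          and Q = "0 < n j" and t = "n(j := n j - 1)" and A = ?A
          and g = "\<lambda>_. s j (n j) * rt j 0"]
        fun_upd_in_jstates[OF n j]
      by auto
  qed
  have "jackson_q J a s rt n = (\<lambda>m. (\<Sum>i\<in>{1..J}. if m = n(i := n i + 1) then a i else 0)
     + (\<Sum>j\<in>{1..J}. \<Sum>i\<in>{1..J}.
        if i \<noteq> j \<and> 0 < n j \<and> m = n(j := n j - 1, i := n i + 1) then s j (n j) * rt j i else 0)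
     + (\<Sum>j\<in>{1..J}. if 0 < n j \<and> m = n(j := n j - 1) then s j (n j) * rt j 0 else 0))"
    by (simp add: jackson_q_def[abs_def])
  then show ?thesis unfolding jackson_outflow_def using has_sum_add[OF has_sum_add[OF arrivals moves] departures] by simp
qed

lemma jackson_q_has_sum_inflow:
  assumes x: "x \<in> jstates J"
  shows "((\<lambda>m. p m * jackson_q J a s rt m x) has_sum jackson_inflow J a s rt p x) (jstates J - {x})"
proof -
  let ?A = "jstates J - {x}"
  have arrivals: "((\<lambda>m. \<Sum>i\<in>{1..J}. if x = m(i := m i + 1) then p m * a i else 0)
     has_sum (\<Sum>i\<in>{1..J}. if 0 < x i then p (x(i := x i - 1)) * a i else 0)) ?A"
  proof (rule has_sum_sum, simp)
    fix i :: nat assume i: "i \<in> {1..J}"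
    have ne: "0 < x i \<Longrightarrow> x(i := x i - 1) \<noteq> x" by (rule fun_upd_neq) simp
    show "((\<lambda>m. if x = m(i := m i + 1) then p m * a i else 0)
       has_sum (if 0 < x i then p (x(i := x i - 1)) * a i else 0)) ?A"
      by (rule has_sum_if_unique[where g = "\<lambda>m. p m * a i"])
         (use eq_fun_upd_Suc_iff ne fun_upd_in_jstates[OF x i] in auto)
  qed
  have moves: "((\<lambda>m. \<Sum>j\<in>{1..J}. \<Sum>i\<in>{1..J}.
        if i \<noteq> j \<and> 0 < m j \<and> x = m(j := m j - 1, i := m i + 1) then p m * (s j (m j) * rt j i) else 0)
      has_sum (\<Sum>j\<in>{1..J}. \<Sum>i\<in>{1..J}. if i \<noteq> j \<and> 0 < x i
          then p (x(i := x i - 1, j := x j + 1)) * (s j (x j + 1) * rt j i) else 0)) ?A"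
  proof (rule has_sum_sum, simp, rule has_sum_sum, simp)
    fix j i :: nat assume j: "j \<in> {1..J}" and i: "i \<in> {1..J}"
    have ne: "x(i := x i - 1, j := x j + 1) \<noteq> x" by (rule fun_upd_neq) simp
    have eqv: "(i \<noteq> j \<and> 0 < m j \<and> x = m(j := m j - 1, i := m i + 1)) \<longleftrightarrow>
        ((i \<noteq> j \<and> 0 < x i) \<and> m = x(i := x i - 1, j := x j + 1))" for m
      using eq_fun_upd_move_iff[of i j m x] by auto
    have "((\<lambda>m. if i \<noteq> j \<and> 0 < m j \<and> x = m(j := m j - 1, i := m i + 1) then p m * (s j (m j) * rt j i) else 0)
       has_sum (if i \<noteq> j \<and> 0 < x i then p (x(i := x i - 1, j := x j + 1)) *
         (s j ((x(i := x i - 1, j := x j + 1)) j) * rt j i) else 0)) ?A"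
      by (rule has_sum_if_unique[where g = "\<lambda>m. p m * (s j (m j) * rt j i)", OF eqv])
         (use ne fun_upd_in_jstates[OF fun_upd_in_jstates[OF x i] j] in auto)
    then show "((\<lambda>m. if i \<noteq> j \<and> 0 < m j \<and> x = m(j := m j - 1, i := m i + 1) then p m * (s j (m j) * rt j i) else 0)
       has_sum (if i \<noteq> j \<and> 0 < x i then p (x(i := x i - 1, j := x j + 1)) * (s j (x j + 1) * rt j i) else 0)) ?A"
      by (simp only: fun_upd_same)
  qed
  have departures: "((\<lambda>m. \<Sum>j\<in>{1..J}. if 0 < m j \<and> x = m(j := m j - 1) then p m * (s j (m j) * rt j 0) else 0)
      has_sum (\<Sum>j\<in>{1..J}. p (x(j := x j + 1)) * (s j (x j + 1) * rt j 0))) ?A"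
  proof (rule has_sum_sum, simp)
    fix j :: nat assume j: "j \<in> {1..J}"
    have ne: "x(j := x j + 1) \<noteq> x" by (rule fun_upd_neq) simp
    have eqv: "(0 < m j \<and> x = m(j := m j - 1)) \<longleftrightarrow> (True \<and> m = x(j := x j + 1))" for m
      using eq_fun_upd_pred_iff[of m j x] by simp
    have "((\<lambda>m. if 0 < m j \<and> x = m(j := m j - 1) then p m * (s j (m j) * rt j 0) else 0)
       has_sum (if True then p (x(j := x j + 1)) * (s j ((x(j := x j + 1)) j) * rt j 0) else 0)) ?A"
      by (rule has_sum_if_unique[where g = "\<lambda>m. p m * (s j (m j) * rt j 0)", OF eqv])
         (use ne fun_upd_in_jstates[OF x j] in auto)
    then show "((\<lambda>m. if 0 < m j \<and> x = m(j := m j - 1) then p m * (s j (m j) * rt j 0) else 0)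
       has_sum (p (x(j := x j + 1)) * (s j (x j + 1) * rt j 0))) ?A"
      by (simp only: fun_upd_same if_True)
  qed
  have "(\<lambda>m. p m * jackson_q J a s rt m x) = (\<lambda>m. (\<Sum>i\<in>{1..J}. if x = m(i := m i + 1) then p m * a i else 0)
     + (\<Sum>j\<in>{1..J}. \<Sum>i\<in>{1..J}.
        if i \<noteq> j \<and> 0 < m j \<and> x = m(j := m j - 1, i := m i + 1) then p m * (s j (m j) * rt j i) else 0)
     + (\<Sum>j\<in>{1..J}. if 0 < m j \<and> x = m(j := m j - 1) then p m * (s j (m j) * rt j 0) else 0))"
    by (simp add: jackson_q_def distrib_left sum_distrib_left if_distrib cong: if_cong)
  then show ?thesis unfolding jackson_inflow_def using has_sum_add[OF has_sum_add[OF arrivals moves] departures] by simp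
qed

lemma finite_jackson_successors: "finite {y. jackson_q J a s rt z y \<noteq> 0}"
proof -
  define T where "T = (\<lambda>i. z(i := z i + 1)) ` {1..J}
     \<union> (\<lambda>(j, i). z(j := z j - 1, i := z i + 1)) ` ({1..J} \<times> {1..J}) \<union> (\<lambda>j. z(j := z j - 1)) ` {1..J}"
  have "jackson_q J a s rt z y = 0" if "y \<notin> T" for y
  proof -
    have "(\<Sum>i\<in>{1..J}. if y = z(i := z i + 1) then a i else 0) = 0"
      by (rule sum.neutral) (use that in \<open>auto simp: T_def\<close>)
    moreover have "(\<Sum>j\<in>{1..J}. \<Sum>i\<in>{1..J}. if i \<noteq> j \<and> 0 < z j \<and> y = z(j := z j - 1, i := z i + 1)
        then s j (z j) * rt j i else 0) = 0"
      by (intro sum.neutral ballI) (use that in \<open>auto simp: T_def\<close>)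
    moreover have "(\<Sum>j\<in>{1..J}. if 0 < z j \<and> y = z(j := z j - 1) then s j (z j) * rt j 0 else 0) = 0"
      by (rule sum.neutral) (use that in \<open>auto simp: T_def\<close>)
    ultimately show ?thesis unfolding jackson_q_def by simp
  qed
  then have "{y. jackson_q J a s rt z y \<noteq> 0} \<subseteq> T" by blast
  moreover have "finite T" by (simp add: T_def)
  ultimately show ?thesis by (rule finite_subset)
qed

locale jackson_rates =
  fixes J :: nat and a :: "nat \<Rightarrow> real" and s :: "nat \<Rightarrow> nat \<Rightarrow> real" and rt :: "nat \<Rightarrow> nat \<Rightarrow> real"
  assumes a_nonneg: "\<And>i. i \<in> {1..J} \<Longrightarrow> 0 \<le> a i"
    and s_nonneg: "\<And>j k. j \<in> {1..J} \<Longrightarrow> 0 < k \<Longrightarrow> 0 \<le> s j k"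
    and rt_nonneg: "\<And>i j. i \<in> {0..J} \<Longrightarrow> j \<in> {0..J} \<Longrightarrow> 0 \<le> rt i j"
begin

lemma jackson_q_nonneg: "0 \<le> jackson_q J a s rt n m"
  unfolding jackson_q_def
  by (intro add_nonneg_nonneg sum_nonneg) (auto intro!: a_nonneg mult_nonneg_nonneg s_nonneg rt_nonneg)

lemma jackson_q_arrival_ge:
  assumes i: "i \<in> {1..J}"
  shows "a i \<le> jackson_q J a s rt x (x(i := x i + 1))"
proof -
  let ?t = "x(i := x i + 1)"
  have "(if ?t = x(i := x i + 1) then a i else 0) \<le> (\<Sum>l\<in>{1..J}. if ?t = x(l := x l + 1) then a l else 0)"
    by (rule member_le_sum[OF i]) (auto intro: a_nonneg)
  moreover have "0 \<le> (\<Sum>j\<in>{1..J}. \<Sum>l\<in>{1..J}. if l \<noteq> j \<and> 0 < x j \<and> ?t = x(j := x j - 1, l := x l + 1)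
       then s j (x j) * rt j l else 0)"
    by (intro sum_nonneg) (auto intro!: mult_nonneg_nonneg s_nonneg rt_nonneg)
  moreover have "0 \<le> (\<Sum>j\<in>{1..J}. if 0 < x j \<and> ?t = x(j := x j - 1) then s j (x j) * rt j 0 else 0)"
    by (intro sum_nonneg) (auto intro!: mult_nonneg_nonneg s_nonneg rt_nonneg)
  ultimately show ?thesis unfolding jackson_q_def by simp
qed

lemma jackson_q_move_ge:
  assumes i: "i \<in> {1..J}" and j: "j \<in> {1..J}" and ij: "i \<noteq> j" and xj: "0 < x j"
  shows "s j (x j) * rt j i \<le> jackson_q J a s rt x (x(j := x j - 1, i := x i + 1))"
proof -
  let ?t = "x(j := x j - 1, i := x i + 1)"
  let ?f = "\<lambda>j' l. if l \<noteq> j' \<and> 0 < x j' \<and> ?t = x(j' := x j' - 1, l := x l + 1) then s j' (x j') * rt j' l else 0"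
  have "s j (x j) * rt j i = ?f j i" using ij xj by simp
  also have "\<dots> \<le> (\<Sum>l\<in>{1..J}. ?f j l)"
    by (rule member_le_sum[OF i]) (use j in \<open>auto intro!: mult_nonneg_nonneg s_nonneg rt_nonneg\<close>)
  also have "\<dots> \<le> (\<Sum>j'\<in>{1..J}. \<Sum>l\<in>{1..J}. ?f j' l)"
    by (rule member_le_sum[OF j]) (auto intro!: sum_nonneg mult_nonneg_nonneg s_nonneg rt_nonneg)
  moreover have "0 \<le> (\<Sum>l\<in>{1..J}. if ?t = x(l := x l + 1) then a l else 0)"
    by (intro sum_nonneg) (auto intro: a_nonneg)
  moreover have "0 \<le> (\<Sum>j\<in>{1..J}. if 0 < x j \<and> ?t = x(j := x j - 1) then s j (x j) * rt j 0 else 0)"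
    by (intro sum_nonneg) (auto intro!: mult_nonneg_nonneg s_nonneg rt_nonneg)
  ultimately show ?thesis unfolding jackson_q_def by linarith
qed

lemma jackson_q_departure_ge:
  assumes j: "j \<in> {1..J}" and xj: "0 < x j"
  shows "s j (x j) * rt j 0 \<le> jackson_q J a s rt x (x(j := x j - 1))"
proof -
  let ?t = "x(j := x j - 1)"
  have "(if 0 < x j \<and> ?t = x(j := x j - 1) then s j (x j) * rt j 0 else 0)
      \<le> (\<Sum>l\<in>{1..J}. if 0 < x l \<and> ?t = x(l := x l - 1) then s l (x l) * rt l 0 else 0)"
    by (rule member_le_sum[OF j]) (auto intro!: mult_nonneg_nonneg s_nonneg rt_nonneg)
  moreover have "0 \<le> (\<Sum>l\<in>{1..J}. if ?t = x(l := x l + 1) then a l else 0)"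
    by (intro sum_nonneg) (auto intro: a_nonneg)
  moreover have "0 \<le> (\<Sum>j'\<in>{1..J}. \<Sum>l\<in>{1..J}. if l \<noteq> j' \<and> 0 < x j' \<and> ?t = x(j' := x j' - 1, l := x l + 1)
       then s j' (x j') * rt j' l else 0)"
    by (intro sum_nonneg) (auto intro!: mult_nonneg_nonneg s_nonneg rt_nonneg)
  ultimately show ?thesis unfolding jackson_q_def using xj by simp
qed

end

lemma sum_atLeast0_atMost_split:
  fixes J :: nat
  shows "(\<Sum>i\<in>{0..J}. f i) = f 0 + (\<Sum>i\<in>{1..J}. f i)"
  by (simp add: sum.atLeast_Suc_atMost)

lemma sum_split_point:
  fixes J :: nat
  assumes i: "i \<in> {1..J}"
  shows "(\<Sum>j\<in>{1..J}. f j) = f i + (\<Sum>j\<in>{1..J}. if j \<noteq> i then f j else 0)"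
proof -
  have "(\<Sum>j\<in>{1..J}. f j) = f i + (\<Sum>j\<in>{1..J} - {i}. f j)"
    using i by (simp add: sum.remove)
  also have "(\<Sum>j\<in>{1..J} - {i}. f j) = (\<Sum>j\<in>{1..J}. if j \<noteq> i then f j else 0)"
    unfolding sum.inter_filter[OF finite_atLeastAtMost, symmetric] by (rule sum.cong) auto
  finally show ?thesis .
qed

lemma jackson_outflow_eq:
  assumes row: "\<And>j. j \<in> {1..J} \<Longrightarrow> (\<Sum>i\<in>{0..J}. rt j i) = 1"
  shows "jackson_outflow J a s rt x
    = (\<Sum>i\<in>{1..J}. a i) + (\<Sum>j\<in>{1..J}. if 0 < x j then s j (x j) * (1 - rt j j) else 0)"
proof -
  have "(\<Sum>i\<in>{1..J}. if i \<noteq> j \<and> 0 < x j then s j (x j) * rt j i else 0)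
      + (if 0 < x j then s j (x j) * rt j 0 else 0)
     = (if 0 < x j then s j (x j) * (1 - rt j j) else 0)" if j: "j \<in> {1..J}" for j
  proof (cases "0 < x j")
    case True
    have "(\<Sum>i\<in>{1..J}. if i \<noteq> j then rt j i else 0) + rt j 0 = 1 - rt j j"
      using row[OF j] sum_split_point[OF j, of "rt j"] by (simp add: sum_atLeast0_atMost_split)
    moreover have "(\<Sum>i\<in>{1..J}. if i \<noteq> j \<and> 0 < x j then s j (x j) * rt j i else 0)
        = s j (x j) * (\<Sum>i\<in>{1..J}. if i \<noteq> j then rt j i else 0)"
      unfolding sum_distrib_left by (rule sum.cong) (use True in auto)
    ultimately show ?thesis using True by (simp add: distrib_left[symmetric])
  qed simp
  then show ?thesis
    unfolding jackson_outflow_def add.assoc sum.distrib[symmetric] by simp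
qed

text \<open>Kelly's partial balance: a rate-\<open>G\<close> local balance of \<open>p\<close> at every node, together with the
  traffic equations for \<open>G\<close>, implies global balance.\<close>
theorem jackson_inflow_eq_outflow:
  assumes row: "\<And>j. j \<in> {1..J} \<Longrightarrow> (\<Sum>i\<in>{0..J}. rt j i) = 1"
    and traffic: "\<And>j. j \<in> {1..J} \<Longrightarrow> G j = a j + (\<Sum>i\<in>{1..J}. G i * rt i j)"
    and throughput: "(\<Sum>i\<in>{1..J}. G i * rt i 0) = (\<Sum>i\<in>{1..J}. a i)"
    and local_balance: "\<And>y j. j \<in> {1..J} \<Longrightarrow> p (y(j := y j + 1)) * s j (y j + 1) = G j * p y"
  shows "jackson_inflow J a s rt p x = p x * jackson_outflow J a s rt x"
proof -
  let ?I = "{1..J::nat}"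
  have local_balance': "p (x(i := x i - 1)) * G i = p x * s i (x i)" if "i \<in> ?I" "0 < x i" for i
    using local_balance[OF that(1), of "x(i := x i - 1)"] that(2) by (simp add: mult.commute)
  have moves: "(\<Sum>j\<in>?I. \<Sum>i\<in>?I. if i \<noteq> j \<and> 0 < x i
          then p (x(i := x i - 1, j := x j + 1)) * (s j (x j + 1) * rt j i) else 0)
     = (\<Sum>i\<in>?I. if 0 < x i then p (x(i := x i - 1)) * (\<Sum>j\<in>?I. if j \<noteq> i then G j * rt j i else 0) else 0)"
  proof -
    have "(if i \<noteq> j \<and> 0 < x i then p (x(i := x i - 1, j := x j + 1)) * (s j (x j + 1) * rt j i) else 0)
       = (if i \<noteq> j \<and> 0 < x i then p (x(i := x i - 1)) * (G j * rt j i) else 0)" if "j \<in> ?I" for i j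
      using local_balance[OF that, of "x(i := x i - 1)"] by (auto simp: mult.assoc[symmetric])
    then have "(\<Sum>j\<in>?I. \<Sum>i\<in>?I. if i \<noteq> j \<and> 0 < x i
          then p (x(i := x i - 1, j := x j + 1)) * (s j (x j + 1) * rt j i) else 0)
      = (\<Sum>i\<in>?I. \<Sum>j\<in>?I. if i \<noteq> j \<and> 0 < x i then p (x(i := x i - 1)) * (G j * rt j i) else 0)"
      by (subst sum.swap) (intro sum.cong refl, auto)
    also have "\<dots> = (\<Sum>i\<in>?I. if 0 < x i
        then p (x(i := x i - 1)) * (\<Sum>j\<in>?I. if j \<noteq> i then G j * rt j i else 0) else 0)"
      by (intro sum.cong refl) (auto simp: sum_distrib_left intro!: sum.cong)
    finally show ?thesis .
  qed
  have node: "(if 0 < x i then p (x(i := x i - 1)) * a i else 0)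
     + (if 0 < x i then p (x(i := x i - 1)) * (\<Sum>j\<in>?I. if j \<noteq> i then G j * rt j i else 0) else 0)
     = (if 0 < x i then p x * (s i (x i) * (1 - rt i i)) else 0)" if i: "i \<in> ?I" for i
  proof (cases "0 < x i")
    case True
    have "a i + (\<Sum>j\<in>?I. if j \<noteq> i then G j * rt j i else 0) = G i * (1 - rt i i)"
      using traffic[OF i] sum_split_point[OF i, of "\<lambda>j. G j * rt j i"] by (simp add: algebra_simps)
    then show ?thesis
      using True local_balance'[OF i True] by (simp add: distrib_left[symmetric] mult.assoc[symmetric])
  qed simp
  have "p (x(j := x j + 1)) * (s j (x j + 1) * rt j 0) = p x * (G j * rt j 0)" if "j \<in> ?I" for j
  proof -
    have "p (x(j := x j + 1)) * (s j (x j + 1) * rt j 0) = (p (x(j := x j + 1)) * s j (x j + 1)) * rt j 0"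
      by (simp only: mult.assoc)
    then show ?thesis using local_balance[OF that, of x] by simp
  qed
  then have "(\<Sum>j\<in>?I. p (x(j := x j + 1)) * (s j (x j + 1) * rt j 0)) = (\<Sum>j\<in>?I. p x * (G j * rt j 0))"
    by (rule sum.cong[OF refl])
  then have departures: "(\<Sum>j\<in>?I. p (x(j := x j + 1)) * (s j (x j + 1) * rt j 0)) = p x * (\<Sum>i\<in>?I. a i)"
    unfolding throughput[symmetric] by (simp add: sum_distrib_left)
  have "jackson_inflow J a s rt p x
      = (\<Sum>i\<in>?I. if 0 < x i then p x * (s i (x i) * (1 - rt i i)) else 0) + p x * (\<Sum>i\<in>?I. a i)"
    unfolding jackson_inflow_def moves departures
    by (simp add: add.assoc[symmetric] sum.distrib[symmetric] node)
  also have "\<dots> = p x * jackson_outflow J a s rt x"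
    using jackson_outflow_eq[OF row, where a = a and s = s and x = x]
    by (simp add: distrib_left sum_distrib_left if_distrib cong: if_cong)
  finally show ?thesis .
qed

section \<open>Product-form sums\<close>

definition vanishing_outside :: "nat set \<Rightarrow> (nat \<Rightarrow> nat) set" where
  "vanishing_outside K = {n. \<forall>l. l \<notin> K \<longrightarrow> n l = 0}"

lemma has_sum_fun_upd_mult:
  fixes f :: "nat \<Rightarrow> real" and g :: "(nat \<Rightarrow> nat) \<Rightarrow> real"
  assumes fnn: "\<And>k. 0 \<le> f k" and fs: "(f has_sum a) UNIV"
    and gnn: "\<And>n. n \<in> vanishing_outside K \<Longrightarrow> 0 \<le> g n" and gs: "(g has_sum b) (vanishing_outside K)" and j: "j \<notin> K"
  shows "((\<lambda>n. f (n j) * g (n(j := 0))) has_sum (a * b)) (vanishing_outside (insert j K))"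
proof -
  have bij: "bij_betw (\<lambda>(k, m). m(j := k)) (UNIV \<times> vanishing_outside K) (vanishing_outside (insert j K))"
  proof (rule bij_betwI[where g = "\<lambda>n. (n j, n(j := 0))"])
    show "(\<lambda>(k, m). m(j := k)) \<in> UNIV \<times> vanishing_outside K \<rightarrow> vanishing_outside (insert j K)"
      by (auto simp: vanishing_outside_def)
    show "(\<lambda>n. (n j, n(j := 0))) \<in> vanishing_outside (insert j K) \<rightarrow> UNIV \<times> vanishing_outside K"
      by (auto simp: vanishing_outside_def)
    show "(\<lambda>n. (n j, n(j := 0))) ((\<lambda>(k, m). m(j := k)) x) = x" if "x \<in> UNIV \<times> vanishing_outside K" for x
      using that j by (auto simp: vanishing_outside_def fun_eq_iff)
    show "(\<lambda>(k, m). m(j := k)) ((\<lambda>n. (n j, n(j := 0))) y) = y" if "y \<in> vanishing_outside (insert j K)" for y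
      by auto
  qed
  have inner: "((\<lambda>m. f k * g m) has_sum (f k * b)) (vanishing_outside K)" for k
    by (rule has_sum_cmult_right[OF gs])
  have outer: "((\<lambda>k. f k * b) has_sum (a * b)) UNIV"
    by (rule has_sum_cmult_left[OF fs])
  have summ: "(\<lambda>(k, m). f k * g m) summable_on Sigma UNIV (\<lambda>_. vanishing_outside K)"
    by (rule summable_on_SigmaI[where g = "\<lambda>k. f k * b"])
       (use inner has_sum_imp_summable[OF outer] fnn gnn in \<open>auto intro: mult_nonneg_nonneg\<close>)
  have "((\<lambda>(k, m). f k * g m) has_sum (a * b)) (Sigma UNIV (\<lambda>_. vanishing_outside K))"
    by (rule has_sum_SigmaI[OF _ outer summ]) (use inner in auto)
  then have "((\<lambda>(k, m). f k * g m) has_sum (a * b)) (UNIV \<times> vanishing_outside K)" by simp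
  then have "((\<lambda>x. (\<lambda>n. f (n j) * g (n(j := 0))) ((\<lambda>(k, m). m(j := k)) x)) has_sum (a * b))
      (UNIV \<times> vanishing_outside K)"
    by (rule has_sum_cong[THEN iffD1, rotated])
       (use j in \<open>auto simp: vanishing_outside_def fun_upd_idem\<close>)
  then show ?thesis using has_sum_reindex_bij_betw[OF bij] by blast
qed

lemma has_sum_product_form:
  fixes f :: "nat \<Rightarrow> nat \<Rightarrow> real" and g :: "(nat \<Rightarrow> nat) \<Rightarrow> real"
  assumes K: "finite K" and disj: "K \<inter> K' = {}"
    and fnn: "\<And>j k. j \<in> K \<Longrightarrow> 0 \<le> f j k" and fs: "\<And>j. j \<in> K \<Longrightarrow> (f j has_sum 1) UNIV"
    and gnn: "\<And>n. n \<in> vanishing_outside K' \<Longrightarrow> 0 \<le> g n" and gs: "(g has_sum c) (vanishing_outside K')"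
  shows "((\<lambda>n. (\<Prod>j\<in>K. f j (n j)) * g (\<lambda>l. if l \<in> K' then n l else 0)) has_sum c) (vanishing_outside (K \<union> K'))"
  using K disj fnn fs
proof (induction K rule: finite_induct)
  case empty
  have "(g has_sum c) (vanishing_outside K') \<longleftrightarrow>
     ((\<lambda>n. (\<Prod>j\<in>{}. f j (n j)) * g (\<lambda>l. if l \<in> K' then n l else 0)) has_sum c) (vanishing_outside K')"
  proof (rule has_sum_cong)
    fix n assume "n \<in> vanishing_outside K'"
    then have "(\<lambda>l. if l \<in> K' then n l else 0) = n" by (auto simp: vanishing_outside_def fun_eq_iff)
    then show "g n = (\<Prod>j\<in>{}. f j (n j)) * g (\<lambda>l. if l \<in> K' then n l else 0)" by simp
  qed
  with gs show ?case by simp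
next
  case (insert j K)
  let ?h = "\<lambda>n. (\<Prod>j\<in>K. f j (n j)) * g (\<lambda>l. if l \<in> K' then n l else 0)"
  have IH: "(?h has_sum c) (vanishing_outside (K \<union> K'))" using insert by auto
  have hnn: "0 \<le> ?h n" if "n \<in> vanishing_outside (K \<union> K')" for n
  proof (rule mult_nonneg_nonneg)
    show "0 \<le> (\<Prod>j\<in>K. f j (n j))" using insert.prems by (intro prod_nonneg) auto
    show "0 \<le> g (\<lambda>l. if l \<in> K' then n l else 0)" by (rule gnn) (auto simp: vanishing_outside_def)
  qed
  have jn: "j \<notin> K \<union> K'" using insert by auto
  have step: "((\<lambda>n. f j (n j) * ?h (n(j := 0))) has_sum (1 * c)) (vanishing_outside (insert j (K \<union> K')))"
    by (rule has_sum_fun_upd_mult[OF _ _ hnn IH jn]) (use insert.prems in auto)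
  have "((\<lambda>n. f j (n j) * ?h (n(j := 0))) has_sum c) (vanishing_outside (insert j K \<union> K')) \<longleftrightarrow>
     ((\<lambda>n. (\<Prod>j\<in>insert j K. f j (n j)) * g (\<lambda>l. if l \<in> K' then n l else 0)) has_sum c) (vanishing_outside (insert j K \<union> K'))"
  proof (rule has_sum_cong)
    fix n :: "nat \<Rightarrow> nat"
    have p: "(\<Prod>i\<in>K. f i ((n(j := 0)) i)) = (\<Prod>i\<in>K. f i (n i))"
      by (rule prod.cong) (use insert.hyps in auto)
    have r: "(\<lambda>l. if l \<in> K' then (n(j := 0)) l else 0) = (\<lambda>l. if l \<in> K' then n l else 0)"
      using jn by auto
    show "f j (n j) * ?h (n(j := 0)) = (\<Prod>j\<in>insert j K. f j (n j)) * g (\<lambda>l. if l \<in> K' then n l else 0)"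
      unfolding p r using insert.hyps by (simp add: mult.assoc)
  qed
  with step show ?case by simp
qed

section \<open>Irreducible stochastic matrices\<close>

lemma closed_set_rtrancl:
  assumes closed: "closed_set S q C" and path: "(x, y) \<in> (trans_rel S q)\<^sup>*" and x: "x \<in> C"
  shows "y \<in> C"
  using path x
proof (induction rule: rtrancl_induct)
  case (step y z)
  then have "y \<in> C" "z \<in> S" "0 < q y z" by (auto simp: trans_rel_def)
  then show ?case using closed unfolding closed_set_def by force
qed

text \<open>\<open>\<bar>m\<bar>\<close> is subinvariant and has the same total mass as \<open>\<bar>m\<bar> r\<close>.\<close>
lemma invariant_measure_abs:
  assumes r_stoch: "stochastic_on J r" and inv: "invariant_measure J r m"
  shows "invariant_measure J r (\<lambda>i. \<bar>m i\<bar>)"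
proof -
  define N where "N = {0..J}"
  have r_nonneg: "0 \<le> r i j" if "i \<in> N" "j \<in> N" for i j
    using r_stoch that by (simp add: stochastic_on_def N_def)
  have le: "\<bar>m j\<bar> \<le> (\<Sum>i\<in>N. \<bar>m i\<bar> * r i j)" if j: "j \<in> N" for j
  proof -
    have "\<bar>m j\<bar> = \<bar>\<Sum>i\<in>N. m i * r i j\<bar>" using inv j by (simp add: invariant_measure_def N_def)
    also have "\<dots> \<le> (\<Sum>i\<in>N. \<bar>m i * r i j\<bar>)" by (rule sum_abs)
    also have "\<dots> = (\<Sum>i\<in>N. \<bar>m i\<bar> * r i j)"
      by (rule sum.cong) (use r_nonneg j in \<open>auto simp: abs_mult\<close>)
    finally show ?thesis .
  qed
  have "(\<Sum>j\<in>N. \<Sum>i\<in>N. \<bar>m i\<bar> * r i j) = (\<Sum>i\<in>N. \<bar>m i\<bar> * (\<Sum>j\<in>N. r i j))"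
    by (subst sum.swap) (simp add: sum_distrib_left)
  also have "\<dots> = (\<Sum>i\<in>N. \<bar>m i\<bar>)" using r_stoch by (simp add: stochastic_on_def N_def)
  finally have "(\<Sum>j\<in>N. (\<Sum>i\<in>N. \<bar>m i\<bar> * r i j) - \<bar>m j\<bar>) = 0" by (simp add: sum_subtractf)
  then show ?thesis
    using sum_nonneg_eq_0_iff[of N "\<lambda>j. (\<Sum>i\<in>N. \<bar>m i\<bar> * r i j) - \<bar>m j\<bar>"] le
    by (simp add: invariant_measure_def N_def)
qed

text \<open>Adding the invariance equations of \<open>\<bar>m\<bar>\<close> and \<open>m\<close> at \<open>c\<close> shows that \<open>m b > 0\<close> and
  \<open>r b c > 0\<close> force \<open>m c > 0\<close>.\<close>
lemma invariant_measure_pos: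
  assumes r_stoch: "stochastic_on J r" and r_irred: "irreducible_matrix J r"
    and inv: "invariant_measure J r m" and i0: "i0 \<in> {0..J}" "0 < m i0" and j: "j \<in> {0..J}"
  shows "0 < m j"
proof -
  define N where "N = {0..J}"
  have inv_sum: "m j + \<bar>m j\<bar> = (\<Sum>i\<in>N. \<bar>m i\<bar> * r i j + m i * r i j)" if "j \<in> N" for j
  proof -
    have "m j = (\<Sum>i\<in>N. m i * r i j)" "\<bar>m j\<bar> = (\<Sum>i\<in>N. \<bar>m i\<bar> * r i j)"
      using inv invariant_measure_abs[OF r_stoch inv] that unfolding invariant_measure_def N_def by blast+
    then show ?thesis by (simp add: sum.distrib)
  qed
  define R where "R = {(a, b). a \<in> {0..J} \<and> b \<in> {0..J} \<and> 0 < r a b}"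
  have "0 < m b" if "(a, b) \<in> R\<^sup>*" "0 < m a" for a b
    using that
  proof (induction rule: rtrancl_induct)
    case (step b c)
    have bc: "b \<in> N" "c \<in> N" "0 < r b c" using step.hyps(2) by (auto simp: R_def N_def)
    have nonneg: "0 \<le> \<bar>m i\<bar> * r i c + m i * r i c" if "i \<in> N" for i
    proof -
      have "\<bar>m i * r i c\<bar> = \<bar>m i\<bar> * r i c"
        using r_stoch that bc(2) by (simp add: abs_mult stochastic_on_def N_def)
      moreover have "- (m i * r i c) \<le> \<bar>m i * r i c\<bar>" by simp
      ultimately show ?thesis by linarith
    qed
    show ?case
    proof (rule ccontr)
      assume "\<not> 0 < m c"
      then have "(\<Sum>i\<in>N. \<bar>m i\<bar> * r i c + m i * r i c) = 0"
        using inv_sum[OF bc(2)] by simp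
      then have "\<bar>m b\<bar> * r b c + m b * r b c = 0"
        using sum_nonneg_eq_0_iff[of N, OF _ nonneg] bc(1) by (simp add: N_def)
      then show False using step.IH step.prems bc(3) by (simp add: add_pos_pos)
    qed
  qed simp
  moreover have "(i0, j) \<in> R\<^sup>*" using r_irred i0 j by (simp add: irreducible_matrix_def R_def)
  ultimately show ?thesis using i0 by blast
qed

lemma irreducible_matrix_exits_0:
  assumes irr: "irreducible_matrix J r" and J: "1 \<le> J"
  obtains c where "c \<in> {1..J}" "0 < r 0 c"
proof -
  define R where "R = {(a, b). a \<in> {0..J} \<and> b \<in> {0..J} \<and> 0 < r a b}"
  have "\<forall>i\<in>{0..J}. \<forall>j\<in>{0..J}. (i, j) \<in> R\<^sup>*"
    using irr unfolding irreducible_matrix_def R_def .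
  then have "(0, 1) \<in> R\<^sup>*" using J by auto
  then have path: "(0, 1) \<in> (R - Id)\<^sup>*" by (simp only: rtrancl_r_diff_Id)
  obtain c where "(0, c) \<in> R - Id"
  proof (rule converse_rtranclE[OF path])
    assume "(0::nat) = 1" then show ?thesis by simp
  next
    fix y assume "(0, y) \<in> R - Id" then show ?thesis by (rule that)
  qed
  then have "c \<in> {1..J}" "0 < r 0 c" by (auto simp: R_def)
  then show ?thesis by (rule that)
qed

section \<open>The modified network \<open>X^(\<gamma>)\<close>\<close>

locale jackson_gamma_network =
  fixes J :: nat and lam :: real and \<mu> :: "nat \<Rightarrow> nat \<Rightarrow> real" and r :: "nat \<Rightarrow> nat \<Rightarrow> real"
    and \<eta> :: "nat \<Rightarrow> real" and \<gamma> :: "nat \<Rightarrow> real" and ra :: "nat \<Rightarrow> nat \<Rightarrow> real"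
  assumes J_pos: "1 \<le> J"
    and lam_pos: "0 < lam"
    and mu_pos: "\<forall>j\<in>{1..J}. \<forall>n\<ge>1. 0 < \<mu> j n"
    and r_stoch: "stochastic_on J r"
    and r_irred: "irreducible_matrix J r"
    and eta_0: "\<eta> 0 = lam"
    and eta_traffic: "\<forall>j\<in>{0..J}. \<eta> j = (\<Sum>i\<in>{0..J}. \<eta> i * r i j)"
    and C_fin: "\<forall>j\<in>{1..J}. summable (\<lambda>n. \<Prod>k\<in>{1..n}. \<eta> j / \<mu> j k)"
    and gamma_nonneg: "\<forall>j\<in>{1..J}. 0 \<le> \<gamma> j"
    and ra_stoch: "stochastic_on J ra"
    and ra_inv: "invariant_measure J ra (\<lambda>j. alpha J \<gamma> j * \<eta> j)"
begin

abbreviation S where "S \<equiv> jstates J"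
abbreviation B where "B \<equiv> Bset J \<gamma>"
abbreviation W where "W \<equiv> Wset J \<gamma>"
abbreviation \<beta> where "\<beta> \<equiv> beta J \<gamma>"
abbreviation q\<gamma> where "q\<gamma> \<equiv> jackson_q_gamma J lam \<gamma> \<mu> ra"
abbreviation \<xi> where "\<xi> \<equiv> jackson_xi J \<eta> \<mu>"

definition arrival where "arrival i = \<beta> * lam * ra 0 i"
definition service where "service j k = \<gamma> j * \<mu> j k"

definition throughput where "throughput j = \<gamma> j * \<eta> j"

lemma q\<gamma>_eq: "q\<gamma> = jackson_q J arrival service ra"
  by (simp add: jackson_q_gamma_def arrival_def[abs_def] service_def[abs_def])

lemma ra_nonneg: "i \<in> {0..J} \<Longrightarrow> j \<in> {0..J} \<Longrightarrow> 0 \<le> ra i j"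
  using ra_stoch by (auto simp: stochastic_on_def)

lemma ra_row: "i \<in> {0..J} \<Longrightarrow> (\<Sum>j\<in>{0..J}. ra i j) = 1"
  using ra_stoch by (auto simp: stochastic_on_def)

lemma ra_row_0: "(\<Sum>i\<in>{1..J}. ra 0 i) = 1 - ra 0 0"
  using ra_row[of 0] by (simp add: sum_atLeast0_atMost_split)

lemma ra_le_1: "i \<in> {0..J} \<Longrightarrow> j \<in> {0..J} \<Longrightarrow> ra i j \<le> 1"
  using member_le_sum[of j "{0..J}" "ra i"] ra_nonneg ra_row by fastforce

lemma eta_pos: "j \<in> {0..J} \<Longrightarrow> 0 < \<eta> j"
  using invariant_measure_pos[OF r_stoch r_irred _ _ _, of \<eta> 0] eta_traffic eta_0 lam_pos
  by (simp add: invariant_measure_def)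

lemma beta_pos: "0 < \<beta>"
  unfolding beta_def by auto

lemma beta_alpha: "j \<in> {1..J} \<Longrightarrow> \<beta> * alpha J \<gamma> j = \<gamma> j"
  unfolding beta_def alpha_def by auto

lemma alpha_nonneg: "j \<in> {0..J} \<Longrightarrow> 0 \<le> alpha J \<gamma> j"
  using beta_alpha[of j] gamma_nonneg beta_pos
  by (cases "j = 0") (auto simp: alpha_def zero_le_mult_iff)

lemma B_subset: "B \<subseteq> {1..J}" by (auto simp: Bset_def)
lemma W_eq: "W = {j\<in>{1..J}. \<gamma> j \<noteq> 0}" by (auto simp: Wset_def Bset_def)
lemma B_Un_W: "B \<union> W = {1..J}" by (auto simp: Wset_def Bset_def)
lemma B_Int_W: "B \<inter> W = {}" by (auto simp: Wset_def Bset_def)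
lemma gamma_pos_W: "j \<in> W \<Longrightarrow> 0 < \<gamma> j" using gamma_nonneg by (force simp: W_eq)
lemma gamma_B: "j \<in> B \<Longrightarrow> \<gamma> j = 0" by (simp add: Bset_def)

sublocale rates: jackson_rates J arrival service ra
proof
  show "0 \<le> arrival i" if "i \<in> {1..J}" for i
    unfolding arrival_def using beta_pos lam_pos ra_nonneg[of 0 i] that by simp
  show "0 \<le> service j k" if "j \<in> {1..J}" "0 < k" for j k
    unfolding service_def using gamma_nonneg mu_pos that by (simp add: less_imp_le)
qed (rule ra_nonneg)

lemma beta_alpha_eta_invariant:
  "j \<in> {0..J} \<Longrightarrow> \<beta> * (alpha J \<gamma> j * \<eta> j) = \<beta> * lam * ra 0 j + (\<Sum>i\<in>{1..J}. throughput i * ra i j)"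
  using ra_inv unfolding invariant_measure_def
  by (simp add: sum_atLeast0_atMost_split sum_distrib_left algebra_simps alpha_def eta_0 throughput_def
      beta_alpha[symmetric])

lemma throughput_traffic:
  "j \<in> {1..J} \<Longrightarrow> throughput j = arrival j + (\<Sum>i\<in>{1..J}. throughput i * ra i j)"
  using beta_alpha_eta_invariant[of j] beta_alpha[of j]
  by (simp add: arrival_def throughput_def mult.assoc[symmetric])

lemma sum_arrival: "(\<Sum>i\<in>{1..J}. arrival i) = \<beta> * lam * (1 - ra 0 0)"
proof -
  have "(\<Sum>i\<in>{1..J}. arrival i) = \<beta> * lam * (\<Sum>i\<in>{1..J}. ra 0 i)"
    by (simp add: arrival_def sum_distrib_left)
  also have "\<dots> = \<beta> * lam * (1 - ra 0 0)" unfolding ra_row_0 ..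
  finally show ?thesis .
qed

lemma throughput_exit: "(\<Sum>i\<in>{1..J}. throughput i * ra i 0) = (\<Sum>i\<in>{1..J}. arrival i)"
proof -
  note sum_arrival
  moreover have "\<beta> * lam = \<beta> * lam * ra 0 0 + (\<Sum>i\<in>{1..J}. throughput i * ra i 0)"
    using beta_alpha_eta_invariant[of 0] by (simp add: alpha_def eta_0)
  ultimately show ?thesis by (simp add: algebra_simps)
qed

lemma ra_into_B:
  assumes i: "i \<in> B"
  shows "ra 0 i = 0" and "\<And>j. j \<in> W \<Longrightarrow> ra j i = 0"
proof -
  have iJ: "i \<in> {0..J}" using i B_subset by auto
  have nonneg: "0 \<le> alpha J \<gamma> l * \<eta> l * ra l i" if "l \<in> {0..J}" for l
    using that iJ by (intro mult_nonneg_nonneg alpha_nonneg ra_nonneg less_imp_le[OF eta_pos])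
  have "alpha J \<gamma> i = 0" using i by (simp add: alpha_def Bset_def)
  then have "(\<Sum>l\<in>{0..J}. alpha J \<gamma> l * \<eta> l * ra l i) = 0"
    using ra_inv iJ unfolding invariant_measure_def by (metis mult_zero_left)
  then have zero: "alpha J \<gamma> l * \<eta> l * ra l i = 0" if "l \<in> {0..J}" for l
    using sum_nonneg_eq_0_iff[of "{0..J}", OF _ nonneg] that by simp
  show "ra 0 i = 0" using zero[of 0] eta_0 lam_pos by (simp add: alpha_def)
  fix j assume j: "j \<in> W"
  then have jJ: "j \<in> {1..J}" by (simp add: W_eq)
  have "0 < \<beta> * alpha J \<gamma> j" using beta_alpha[OF jJ] gamma_pos_W[OF j] by simp
  then have "0 < alpha J \<gamma> j" using beta_pos by (simp add: zero_less_mult_iff)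
  then show "ra j i = 0" using zero[of j] eta_pos[of j] jJ by simp
qed

lemma normC_pos: "j \<in> {1..J} \<Longrightarrow> 0 < normC \<eta> \<mu> j"
proof -
  assume j: "j \<in> {1..J}"
  have "0 \<le> (\<Prod>k\<in>{1..n}. \<eta> j / \<mu> j k)" for n
    using eta_pos[of j] mu_pos j by (intro prod_nonneg) (auto intro!: divide_nonneg_pos less_imp_le)
  then show ?thesis unfolding normC_def
    by (intro suminf_pos2[where i = 0]) (use C_fin j in auto)
qed

lemma node_factor_pos: "j \<in> {1..J} \<Longrightarrow> 0 < node_factor \<eta> \<mu> j k"
  unfolding node_factor_def using normC_pos eta_pos[of j] mu_pos
  by (intro divide_pos_pos prod_pos) (auto intro!: divide_pos_pos)

lemma node_factor_nonneg: "j \<in> {1..J} \<Longrightarrow> 0 \<le> node_factor \<eta> \<mu> j k"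
  using node_factor_pos less_imp_le by blast

lemma node_factor_has_sum: "j \<in> {1..J} \<Longrightarrow> (node_factor \<eta> \<mu> j has_sum 1) UNIV"
proof -
  assume j: "j \<in> {1..J}"
  have "(\<lambda>n. \<Prod>k\<in>{1..n}. \<eta> j / \<mu> j k) sums normC \<eta> \<mu> j"
    unfolding normC_def using C_fin j by (simp add: summable_sums)
  then have "(\<lambda>n. (\<Prod>k\<in>{1..n}. \<eta> j / \<mu> j k) / normC \<eta> \<mu> j) sums (normC \<eta> \<mu> j / normC \<eta> \<mu> j)"
    by (rule sums_divide)
  then have "node_factor \<eta> \<mu> j sums 1"
    using normC_pos[OF j] by (simp add: node_factor_def[abs_def])
  then show ?thesis by (rule sums_nonneg_imp_has_sum) (rule node_factor_nonneg[OF j])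
qed

lemma node_factor_Suc:
  assumes j: "j \<in> {1..J}"
  shows "node_factor \<eta> \<mu> j (k + 1) * \<mu> j (k + 1) = \<eta> j * node_factor \<eta> \<mu> j k"
proof -
  have "0 < \<mu> j (k + 1)" using mu_pos j by auto
  moreover have "node_factor \<eta> \<mu> j (k + 1)
      = (\<Prod>l\<in>{1..k}. \<eta> j / \<mu> j l) * (\<eta> j / \<mu> j (k + 1)) / normC \<eta> \<mu> j"
    by (simp add: node_factor_def)
  ultimately show ?thesis by (simp add: node_factor_def field_simps)
qed

text \<open>The candidate stationary distribution for a distribution \<open>\<phi>\<close> of the frozen blocked queues.\<close>
definition product_form :: "((nat \<Rightarrow> nat) \<Rightarrow> real) \<Rightarrow> (nat \<Rightarrow> nat) \<Rightarrow> real" where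
  "product_form \<phi> n = (\<Prod>j\<in>W. node_factor \<eta> \<mu> j (n j)) * \<phi> (\<lambda>l. if l \<in> B then n l else 0)"

lemma product_form_local_balance:
  assumes j: "j \<in> {1..J}"
  shows "product_form \<phi> (y(j := y j + 1)) * service j (y j + 1) = throughput j * product_form \<phi> y"
proof (cases "j \<in> B")
  case False
  then have jW: "j \<in> W" using j by (auto simp: Wset_def)
  have blocked: "(\<lambda>l. if l \<in> B then (y(j := y j + 1)) l else 0) = (\<lambda>l. if l \<in> B then y l else 0)"
    using False by auto
  have "(\<Prod>l\<in>W. node_factor \<eta> \<mu> l ((y(j := y j + 1)) l))
      = node_factor \<eta> \<mu> j (y j + 1) * (\<Prod>l\<in>W - {j}. node_factor \<eta> \<mu> l (y l))"
    using jW by (simp add: prod.remove Wset_def)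
  moreover have "(\<Prod>l\<in>W. node_factor \<eta> \<mu> l (y l)) = node_factor \<eta> \<mu> j (y j) * (\<Prod>l\<in>W - {j}. node_factor \<eta> \<mu> l (y l))"
    using jW by (simp add: prod.remove Wset_def)
  ultimately show ?thesis
    unfolding product_form_def blocked throughput_def service_def
    using node_factor_Suc[OF j, of "y j"] by (simp add: algebra_simps)
qed (simp add: gamma_B service_def throughput_def)

lemma product_form_has_sum:
  assumes \<phi>_nonneg: "\<And>m. m \<in> vanishing_outside B \<Longrightarrow> 0 \<le> \<phi> m" and \<phi>_sum: "(\<phi> has_sum 1) (vanishing_outside B)"
  shows "(product_form \<phi> has_sum 1) S"
proof -
  have "(product_form \<phi> has_sum 1) (vanishing_outside (W \<union> B))"
    unfolding product_form_def[abs_def]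
    by (rule has_sum_product_form[OF _ _ _ _ \<phi>_nonneg \<phi>_sum])
       (use B_Int_W node_factor_nonneg node_factor_has_sum in \<open>auto simp: W_eq\<close>)
  moreover have "W \<union> B = {1..J}" using B_Un_W by auto
  ultimately show ?thesis by (simp add: jstates_def vanishing_outside_def)
qed

lemma product_form_nonneg:
  "(\<And>m. m \<in> vanishing_outside B \<Longrightarrow> 0 \<le> \<phi> m) \<Longrightarrow> 0 \<le> product_form \<phi> n"
  unfolding product_form_def
  by (intro mult_nonneg_nonneg prod_nonneg) (auto simp: vanishing_outside_def W_eq intro: node_factor_nonneg)

lemma outrate_eq: "x \<in> S \<Longrightarrow> outrate S q\<gamma> x = jackson_outflow J arrival service ra x"
  unfolding outrate_def q\<gamma>_eq using jackson_q_has_sum_outflow by (blast intro: infsumI)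

lemma product_form_stationary:
  assumes \<phi>_nonneg: "\<And>m. m \<in> vanishing_outside B \<Longrightarrow> 0 \<le> \<phi> m" and \<phi>_sum: "(\<phi> has_sum 1) (vanishing_outside B)"
  shows "stationary_dist S q\<gamma> (product_form \<phi>)"
  unfolding stationary_dist_def
proof (intro conjI ballI)
  show "0 \<le> product_form \<phi> x" for x by (rule product_form_nonneg[OF \<phi>_nonneg])
  show "(product_form \<phi> has_sum 1) S" by (rule product_form_has_sum[OF \<phi>_nonneg \<phi>_sum])
  fix x assume x: "x \<in> S"
  have "jackson_inflow J arrival service ra (product_form \<phi>) x
      = product_form \<phi> x * jackson_outflow J arrival service ra x"
    by (rule jackson_inflow_eq_outflow[where G = throughput,
        OF _ throughput_traffic throughput_exit product_form_local_balance])
       (use ra_row in auto)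
  with jackson_q_has_sum_inflow[OF x, of "product_form \<phi>" arrival service ra]
  show "((\<lambda>y. product_form \<phi> y * q\<gamma> y x) has_sum (product_form \<phi> x * outrate S q\<gamma> x)) (S - {x})"
    by (simp add: q\<gamma>_eq outrate_eq[OF x, unfolded q\<gamma>_eq])
qed

definition blocked_marginal where "blocked_marginal m = (\<Prod>j\<in>B. node_factor \<eta> \<mu> j (m j))"

lemma xi_eq_product_form: "\<xi> = product_form blocked_marginal"
proof
  fix n
  have "\<xi> n = (\<Prod>j\<in>W \<union> B. node_factor \<eta> \<mu> j (n j))"
    unfolding jackson_xi_def using B_Un_W by (simp add: Un_commute)
  also have "\<dots> = (\<Prod>j\<in>W. node_factor \<eta> \<mu> j (n j)) * (\<Prod>j\<in>B. node_factor \<eta> \<mu> j (n j))"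
    by (rule prod.union_disjoint) (use B_Int_W B_subset finite_subset in \<open>auto simp: Wset_def\<close>)
  finally show "\<xi> n = product_form blocked_marginal n"
    by (simp add: product_form_def blocked_marginal_def)
qed

lemma blocked_marginal_nonneg: "0 \<le> blocked_marginal m"
  unfolding blocked_marginal_def by (intro prod_nonneg node_factor_nonneg) (use B_subset in auto)

lemma blocked_marginal_has_sum: "(blocked_marginal has_sum 1) (vanishing_outside B)"
proof -
  have "vanishing_outside {} = {\<lambda>_. 0}" by (auto simp: vanishing_outside_def)
  then have one: "((\<lambda>_. 1::real) has_sum 1) (vanishing_outside {})" by (simp add: has_sum_finiteI)
  have "((\<lambda>n. (\<Prod>j\<in>B. node_factor \<eta> \<mu> j (n j)) * (\<lambda>_. 1::real) (\<lambda>l. if l \<in> {} then n l else 0))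
      has_sum 1) (vanishing_outside (B \<union> {}))"
    by (rule has_sum_product_form[OF _ _ _ _ _ one])
       (use B_subset finite_subset node_factor_nonneg node_factor_has_sum in auto)
  then show ?thesis by (simp add: blocked_marginal_def[abs_def])
qed

lemma xi_stationary: "stationary_dist S q\<gamma> \<xi>"
  unfolding xi_eq_product_form
  by (rule product_form_stationary[OF blocked_marginal_nonneg blocked_marginal_has_sum])

definition frozen_class where "frozen_class b = {n \<in> S. \<forall>j\<in>B. n j = b j}"

lemma frozen_class_closed: "closed_set S q\<gamma> (frozen_class b)"
  unfolding closed_set_def
proof (intro conjI ballI)
  show "frozen_class b \<subseteq> S" by (auto simp: frozen_class_def)
  fix x y assume x: "x \<in> frozen_class b" and y: "y \<in> S - frozen_class b"
  then obtain l where l: "l \<in> B" "y l \<noteq> x l" by (auto simp: frozen_class_def)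
  have "(if y = x(i := x i + 1) then arrival i else 0) = 0" for i
    using ra_into_B(1)[of i] l by (cases "i \<in> B") (auto simp: arrival_def split: if_splits)
  moreover have "(if i \<noteq> j \<and> 0 < x j \<and> y = x(j := x j - 1, i := x i + 1) then service j (x j) * ra j i else 0) = 0"
    if "j \<in> {1..J}" for i j
  proof (cases "j \<in> B")
    case False
    then have "j \<in> W" using that by (auto simp: Wset_def)
    then show ?thesis using ra_into_B(2)[of i j] l False by (cases "i \<in> B") (auto split: if_splits)
  qed (simp add: service_def gamma_B)
  moreover have "(if 0 < x j \<and> y = x(j := x j - 1) then service j (x j) * ra j 0 else 0) = 0" for j
    using l by (cases "j \<in> B") (auto simp: service_def gamma_B split: if_splits)
  ultimately show "q\<gamma> x y = 0"
    unfolding q\<gamma>_eq jackson_q_def by simp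
qed

lemma not_irreducible:
  assumes "B \<noteq> {}"
  shows "\<not> irreducible_ctmc S q\<gamma>"
proof
  assume irr: "irreducible_ctmc S q\<gamma>"
  obtain j where j: "j \<in> B" using assms by auto
  let ?y = "(\<lambda>_. 0::nat)(j := 1)"
  have zero: "(\<lambda>_. 0) \<in> frozen_class (\<lambda>_. 0)" by (simp add: frozen_class_def jstates_def)
  have "?y \<in> S" using j B_subset by (auto simp: jstates_def)
  then have "((\<lambda>_. 0), ?y) \<in> (trans_rel S q\<gamma>)\<^sup>*"
    using irr by (simp add: irreducible_ctmc_def jstates_def)
  then have "?y \<in> frozen_class (\<lambda>_. 0)" by (rule closed_set_rtrancl[OF frozen_class_closed _ zero])
  then show False using j by (auto simp: frozen_class_def)
qed

lemma infinite_frozen_classes: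
  assumes "B \<noteq> {}"
  shows "infinite {frozen_class b | b. b \<in> S}"
proof
  assume fin: "finite {frozen_class b | b. b \<in> S}"
  obtain j where j: "j \<in> B" using assms by auto
  then have jJ: "j \<in> {1..J}" using B_subset by auto
  let ?e = "\<lambda>k::nat. (\<lambda>_. 0::nat)(j := k)"
  have e_in: "?e k \<in> S" for k using jJ by (simp add: jstates_def)
  have "range (\<lambda>k. frozen_class (?e k)) \<subseteq> {frozen_class b | b. b \<in> S}" using e_in by blast
  then have "finite (range (\<lambda>k. frozen_class (?e k)))" using fin finite_subset by blast
  moreover have "inj (\<lambda>k. frozen_class (?e k))"
  proof (rule injI)
    fix k k' assume eq: "frozen_class (?e k) = frozen_class (?e k')"
    have "?e k \<in> frozen_class (?e k)" using e_in by (simp add: frozen_class_def)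
    then have "?e k \<in> frozen_class (?e k')" by (simp only: eq)
    then show "k = k'" using j by (auto simp: frozen_class_def)
  qed
  ultimately show False using finite_imageD by (metis infinite_UNIV_nat)
qed

lemma outflow_eq: "jackson_outflow J arrival service ra x
    = \<beta> * lam * (1 - ra 0 0) + (\<Sum>j\<in>{1..J}. if 0 < x j then service j (x j) * (1 - ra j j) else 0)"
  using sum_arrival jackson_outflow_eq[of J ra arrival service x] ra_row by simp

lemma service_terms_nonneg: "j \<in> {1..J} \<Longrightarrow> 0 \<le> (if 0 < x j then service j (x j) * (1 - ra j j) else 0)"
  using rates.s_nonneg ra_le_1[of j j] by simp

lemma outflow_nonneg: "0 \<le> jackson_outflow J arrival service ra x"
  unfolding outflow_eq using beta_pos lam_pos ra_le_1[of 0 0] service_terms_nonneg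
  by (intro add_nonneg_nonneg sum_nonneg) auto

lemma \<xi>_pos: "0 < \<xi> z"
  unfolding jackson_xi_def using node_factor_pos by (intro prod_pos) auto

lemma \<xi>_has_sum: "(\<xi> has_sum 1) S"
  using xi_stationary by (simp add: stationary_dist_def)

lemma service_has_sum_throughput:
  assumes j: "j \<in> {1..J}"
  shows "((\<lambda>z. if 0 < z j then \<xi> z * service j (z j) else 0) has_sum throughput j) S"
proof -
  let ?h = "\<lambda>z. if 0 < z j then \<xi> z * service j (z j) else 0"
  let ?g = "\<lambda>y::nat \<Rightarrow> nat. y(j := y j + 1)"
  have inj: "inj_on ?g S"
    by (rule inj_onI) (metis fun_upd_idem_iff fun_upd_upd fun_upd_same add_right_cancel)
  have "(?h \<circ> ?g) = (\<lambda>y. throughput j * \<xi> y)"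
    using product_form_local_balance[OF j, of blocked_marginal] by (auto simp: xi_eq_product_form)
  then have "((?h \<circ> ?g) has_sum throughput j) S"
    using has_sum_cmult_right[OF \<xi>_has_sum, of "throughput j"] by simp
  then have on_image: "(?h has_sum throughput j) (?g ` S)" using has_sum_reindex[OF inj] by blast
  have "(?h has_sum throughput j) (?g ` S) \<longleftrightarrow> (?h has_sum throughput j) S"
  proof (rule has_sum_cong_neutral)
    fix z assume z: "z \<in> S - ?g ` S"
    show "?h z = 0"
    proof (cases "0 < z j")
      case True
      then have "z = ?g (z(j := z j - 1))" by auto
      moreover have "z(j := z j - 1) \<in> S" using z fun_upd_in_jstates[OF _ j] by auto
      ultimately show ?thesis using z by blast
    qed simp
  qed (use fun_upd_in_jstates[OF _ j] in auto)
  then show ?thesis using on_image by simp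
qed

lemma flux_summable: "(\<lambda>z. \<xi> z * outrate S q\<gamma> z) summable_on S"
proof -
  define c where "c = \<beta> * lam * (1 - ra 0 0)"
  define F where "F z = c * \<xi> z + (\<Sum>j\<in>{1..J}. if 0 < z j then \<xi> z * service j (z j) else 0)" for z
  have "(F has_sum (c * 1 + (\<Sum>j\<in>{1..J}. throughput j))) S"
    unfolding F_def[abs_def]
    by (rule has_sum_add[OF has_sum_cmult_right[OF \<xi>_has_sum] has_sum_sum])
       (auto intro: service_has_sum_throughput)
  moreover have "\<xi> z * jackson_outflow J arrival service ra z \<le> F z" for z
  proof -
    have "\<xi> z * jackson_outflow J arrival service ra z
        = c * \<xi> z + (\<Sum>j\<in>{1..J}. \<xi> z * (if 0 < z j then service j (z j) * (1 - ra j j) else 0))"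
      unfolding outflow_eq c_def by (simp add: sum_distrib_left algebra_simps)
    also have "\<dots> \<le> F z"
      unfolding F_def
    proof (intro add_left_mono sum_mono)
      fix j assume j: "j \<in> {1..J}"
      show "\<xi> z * (if 0 < z j then service j (z j) * (1 - ra j j) else 0)
          \<le> (if 0 < z j then \<xi> z * service j (z j) else 0)"
        using \<xi>_pos[of z] rates.s_nonneg[OF j, of "z j"] ra_nonneg[of j j] ra_le_1[of j j] j
        by (auto intro!: mult_left_mono mult_right_le_one_le simp: mult.assoc[symmetric])
    qed
    finally show ?thesis .
  qed
  ultimately have "(\<lambda>z. \<xi> z * jackson_outflow J arrival service ra z) summable_on S"
    by (intro summable_on_comparison_test[OF has_sum_imp_summable])
       (use \<xi>_pos outflow_nonneg in \<open>auto intro: mult_nonneg_nonneg less_imp_le\<close>)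
  then show ?thesis by (rule summable_on_cong[THEN iffD1, rotated]) (simp add: outrate_eq)
qed

lemma outrate_gamma_pos:
  assumes "irreducible_matrix J ra" and z: "z \<in> S"
  shows "0 < outrate S q\<gamma> z"
proof -
  obtain c where "c \<in> {1..J}" "0 < ra 0 c" using irreducible_matrix_exits_0[OF assms(1) J_pos] .
  then have "ra 0 0 < 1"
    using ra_row_0 member_le_sum[of c "{1..J}" "ra 0"] ra_nonneg by fastforce
  then have "0 < \<beta> * lam * (1 - ra 0 0)" using beta_pos lam_pos by simp
  moreover have "0 \<le> (\<Sum>j\<in>{1..J}. if 0 < z j then service j (z j) * (1 - ra j j) else 0)"
    using service_terms_nonneg by (intro sum_nonneg) auto
  ultimately show ?thesis unfolding outrate_eq[OF z] outflow_eq by linarith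
qed

lemma positive_recurrent_states:
  assumes "irreducible_matrix J ra" and x: "x \<in> S"
  shows "positive_recurrent S q\<gamma> x"
proof -
  interpret stationary: ctmc_stationary S q\<gamma> \<xi>
  proof
    show "0 \<le> q\<gamma> z y" for z y unfolding q\<gamma>_eq by (rule rates.jackson_q_nonneg)
    show "q\<gamma> z z = 0" for z by (simp add: q\<gamma>_eq jackson_q_diag)
    show "finite {y \<in> S. q\<gamma> z y \<noteq> 0}" for z
      using finite_jackson_successors[of J arrival service ra z] by (simp add: q\<gamma>_eq)
    show "0 < outrate S q\<gamma> z" if "z \<in> S" for z by (rule outrate_gamma_pos[OF assms(1) that])
    show "0 \<le> \<xi> z" for z by (rule less_imp_le[OF \<xi>_pos])
    show "((\<lambda>z. \<xi> z * q\<gamma> z y) has_sum (\<xi> y * outrate S q\<gamma> y)) (S - {y})" if "y \<in> S" for y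
      using xi_stationary that by (simp add: stationary_dist_def)
    show "(\<lambda>z. \<xi> z * outrate S q\<gamma> z) summable_on S" by (rule flux_summable)
    show "\<xi> summable_on S" using \<xi>_has_sum by (rule has_sum_imp_summable)
  qed
  show ?thesis by (rule stationary.positive_recurrent_if_pos[OF x \<xi>_pos])
qed

context
  assumes B_empty: "B = {}" and ra_irred: "irreducible_matrix J ra"
begin

abbreviation reachable (infix "\<leadsto>" 50) where "x \<leadsto> y \<equiv> (x, y) \<in> (trans_rel S q\<gamma>)\<^sup>*"

lemma reachable_step: "x \<in> S \<Longrightarrow> y \<in> S \<Longrightarrow> x \<noteq> y \<Longrightarrow> 0 < q\<gamma> x y \<Longrightarrow> x \<leadsto> y"
  by (rule r_into_rtrancl) (simp add: trans_rel_def)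

lemma service_pos: "j \<in> {1..J} \<Longrightarrow> 0 < k \<Longrightarrow> 0 < service j k"
  using gamma_pos_W[of j] mu_pos B_empty B_Un_W by (auto simp: service_def)

lemma routing_path: "i \<in> {0..J} \<Longrightarrow> j \<in> {0..J} \<Longrightarrow> (i, j) \<in> {(a, b). a \<in> {0..J} \<and> b \<in> {0..J} \<and> 0 < ra a b}\<^sup>*"
  using ra_irred by (simp add: irreducible_matrix_def)

text \<open>A customer at node \<open>j\<close> can leave the network by following a routing path from \<open>j\<close> to \<open>0\<close>.\<close>
lemma reachable_departure:
  assumes "(j, 0) \<in> {(a, b). a \<in> {0..J} \<and> b \<in> {0..J} \<and> 0 < ra a b}\<^sup>*"
  shows "\<forall>x\<in>S. j \<in> {1..J} \<longrightarrow> 0 < x j \<longrightarrow> x \<leadsto> x(j := x j - 1)"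
  using assms
proof (induction rule: converse_rtrancl_induct)
  case (step y z)
  have yz: "y \<in> {0..J}" "z \<in> {0..J}" "0 < ra y z" using step.hyps(1) by auto
  show ?case
  proof (intro ballI impI)
    fix x assume x: "x \<in> S" and y: "y \<in> {1..J}" and xy: "0 < x y"
    show "x \<leadsto> x(y := x y - 1)"
    proof (cases "z = 0")
      case True
      have "0 < service y (x y) * ra y 0" using service_pos[OF y xy] yz True by simp
      also have "\<dots> \<le> q\<gamma> x (x(y := x y - 1))"
        unfolding q\<gamma>_eq by (rule rates.jackson_q_departure_ge[where j = y and x = x, OF y xy])
      moreover have "x(y := x y - 1) \<noteq> x" by (rule fun_upd_neq) (use xy in simp)
      ultimately show ?thesis by (intro reachable_step x fun_upd_in_jstates[OF x y]) auto
    next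
      case z0: False
      show ?thesis
      proof (cases "z = y")
        case True then show ?thesis using step.IH x y xy by blast
      next
        case False
        then have zJ: "z \<in> {1..J}" using yz z0 by auto
        let ?x' = "x(y := x y - 1, z := x z + 1)"
        have x': "?x' \<in> S" by (intro fun_upd_in_jstates x y zJ)
        have "0 < service y (x y) * ra y z" using service_pos[OF y xy] yz by simp
        also have "\<dots> \<le> q\<gamma> x ?x'"
          unfolding q\<gamma>_eq by (rule rates.jackson_q_move_ge[where i = z and j = y and x = x, OF zJ y False xy])
        finally have "x \<leadsto> ?x'"
          by (intro reachable_step x x') (use fun_upd_neq[of "x z + 1" x z "x(y := x y - 1)"] in auto)
        moreover have "?x' \<leadsto> ?x'(z := ?x' z - 1)"
          using step.IH x' zJ fun_upd_same[of "x(y := x y - 1)" z "x z + 1"] by (metis zero_less_Suc Suc_eq_plus1)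
        moreover have "?x'(z := ?x' z - 1) = x(y := x y - 1)" using False by (auto simp: fun_eq_iff)
        ultimately show ?thesis by (metis rtrancl_trans)
      qed
    qed
  qed
qed simp

text \<open>Dually, an arrival at node \<open>j\<close> can be produced along a routing path from \<open>0\<close> to \<open>j\<close>.\<close>
lemma reachable_arrival:
  assumes "(0, i) \<in> {(a, b). a \<in> {0..J} \<and> b \<in> {0..J} \<and> 0 < ra a b}\<^sup>*"
  shows "\<forall>x\<in>S. i \<in> {1..J} \<longrightarrow> x \<leadsto> x(i := x i + 1)"
  using assms
proof (induction rule: rtrancl_induct)
  case (step y z)
  have yz: "y \<in> {0..J}" "z \<in> {0..J}" "0 < ra y z" using step.hyps(2) by auto
  show ?case
  proof (intro ballI impI)
    fix x assume x: "x \<in> S" and z: "z \<in> {1..J}"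
    show "x \<leadsto> x(z := x z + 1)"
    proof (cases "y = 0")
      case True
      have "0 < arrival z" using True yz beta_pos lam_pos by (simp add: arrival_def)
      also have "\<dots> \<le> q\<gamma> x (x(z := x z + 1))"
        unfolding q\<gamma>_eq by (rule rates.jackson_q_arrival_ge[OF z])
      finally show ?thesis
        by (intro reachable_step x fun_upd_in_jstates[OF x z]) (use fun_upd_neq[of "x z + 1" x z x] in auto)
    next
      case y0: False
      show ?thesis
      proof (cases "y = z")
        case True then show ?thesis using step.IH x z by blast
      next
        case False
        then have yJ: "y \<in> {1..J}" using yz y0 by auto
        let ?x' = "x(y := x y + 1)"
        have x': "?x' \<in> S" by (intro fun_upd_in_jstates x yJ)
        let ?t = "?x'(y := ?x' y - 1, z := ?x' z + 1)"
        have t: "?t = x(z := x z + 1)" using False by (auto simp: fun_eq_iff)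
        have "0 < service y (?x' y) * ra y z" using service_pos[OF yJ] yz by simp
        also have "\<dots> \<le> q\<gamma> ?x' ?t"
          unfolding q\<gamma>_eq by (rule rates.jackson_q_move_ge[where i = z and j = y and x = ?x', OF z yJ]) (use False in auto)
        finally have "?x' \<leadsto> ?t"
          by (intro reachable_step x') (use fun_upd_in_jstates[OF x z] t False in \<open>auto simp: fun_eq_iff\<close>)
        moreover have "x \<leadsto> ?x'" using step.IH x yJ by blast
        ultimately show ?thesis using t by (metis rtrancl_trans)
      qed
    qed
  qed
qed simp

definition customers where "customers x = (\<Sum>l\<in>{1..J}. x l)"

lemma customers_fun_upd:
  fixes x :: "nat \<Rightarrow> nat"
  assumes j: "j \<in> {1..J}"
  shows "customers (x(j := v)) + x j = customers x + v"
  unfolding customers_def using sum.remove[OF _ j, of x] sum.remove[OF _ j, of "x(j := v)"] by simp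

lemma empty_if_no_customers: "x \<in> S \<Longrightarrow> \<forall>j\<in>{1..J}. x j = 0 \<Longrightarrow> x = (\<lambda>_. 0)"
  by (auto simp: jstates_def fun_eq_iff)

lemma reachable_empty: "x \<in> S \<Longrightarrow> x \<leadsto> (\<lambda>_. 0)"
proof (induction "customers x" arbitrary: x rule: less_induct)
  case less
  show ?case
  proof (cases "\<forall>j\<in>{1..J}. x j = 0")
    case False
    then obtain j where j: "j \<in> {1..J}" and xj: "0 < x j" by auto
    have "x \<leadsto> x(j := x j - 1)" using reachable_departure routing_path j less.prems xj by auto
    moreover have "customers (x(j := x j - 1)) < customers x" using customers_fun_upd[OF j, where x = x and v = "x j - 1"] xj by simp
    then have "x(j := x j - 1) \<leadsto> (\<lambda>_. 0)" using less.hyps fun_upd_in_jstates[OF less.prems j] by blast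
    ultimately show ?thesis by (metis rtrancl_trans)
  qed (use empty_if_no_customers[OF less.prems] in simp)
qed

lemma empty_reachable: "y \<in> S \<Longrightarrow> (\<lambda>_. 0) \<leadsto> y"
proof (induction "customers y" arbitrary: y rule: less_induct)
  case less
  show ?case
  proof (cases "\<forall>j\<in>{1..J}. y j = 0")
    case False
    then obtain j where j: "j \<in> {1..J}" and yj: "0 < y j" by auto
    let ?y' = "y(j := y j - 1)"
    have y': "?y' \<in> S" using fun_upd_in_jstates[OF less.prems j] .
    have "customers ?y' < customers y" using customers_fun_upd[OF j, where x = y and v = "y j - 1"] yj by simp
    then have "(\<lambda>_. 0) \<leadsto> ?y'" using less.hyps y' by blast
    moreover have "(0, j) \<in> {(a, b). a \<in> {0..J} \<and> b \<in> {0..J} \<and> 0 < ra a b}\<^sup>*" using routing_path j by auto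
    then have "?y' \<leadsto> ?y'(j := ?y' j + 1)" using reachable_arrival y' j by blast
    moreover have "?y'(j := ?y' j + 1) = y" using yj by auto
    ultimately show ?thesis by (metis rtrancl_trans)
  qed (use empty_if_no_customers[OF less.prems] in simp)
qed

lemma irreducible_if_unblocked: "irreducible_ctmc S q\<gamma>"
  unfolding irreducible_ctmc_def using reachable_empty empty_reachable by (metis rtrancl_trans)

end

end

theorem corollary3p9:
  fixes J :: nat
    and lamj :: "nat \<Rightarrow> real"          \<comment> \<open>external arrival rates \<lambda>_j\<close>
    and \<mu> :: "nat \<Rightarrow> nat \<Rightarrow> real"      \<comment> \<open>service intensities \<mu>_j(n)\<close>
    and r :: "nat \<Rightarrow> nat \<Rightarrow> real"      \<comment> \<open>extended routing matrix on {0..J}\<close>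
    and \<eta> :: "nat \<Rightarrow> real"
    and \<gamma> :: "nat \<Rightarrow> real"
    and ra :: "nat \<Rightarrow> nat \<Rightarrow> real"     \<comment> \<open>the matrix r^(alpha)\<close>
  defines "lam \<equiv> (\<Sum>j\<in>{1..J}. lamj j)"
  assumes lamj_nonneg: "\<forall>j\<in>{1..J}. 0 \<le> lamj j"
    and lam_pos: "0 < lam"
    and mu_pos: "\<forall>j\<in>{1..J}. \<forall>n\<ge>1. 0 < \<mu> j n"
    and r_stoch: "stochastic_on J r"
    and r_irred: "irreducible_matrix J r"
    and r_0j: "\<forall>j\<in>{1..J}. r 0 j = lamj j / lam"
    and r_00: "r 0 0 = 0"
    and eta_0: "\<eta> 0 = lam"
    and eta_traffic: "\<forall>j\<in>{0..J}. \<eta> j = (\<Sum>i\<in>{0..J}. \<eta> i * r i j)"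
    and X_ergodic: "ergodic_ctmc (jstates J) (jackson_q J (\<lambda>i. lam * r 0 i) \<mu> r)"
    and C_fin: "\<forall>j\<in>{1..J}. summable (\<lambda>n. \<Prod>k\<in>{1..n}. \<eta> j / \<mu> j k)"
    and gamma_nonneg: "\<forall>j\<in>{1..J}. 0 \<le> \<gamma> j"
    and ra_stoch: "stochastic_on J ra"
    and ra_inv: "invariant_measure J ra (\<lambda>j. alpha J \<gamma> j * \<eta> j)"
  shows "stationary_dist (jstates J) (jackson_q_gamma J lam \<gamma> \<mu> ra) (jackson_xi J \<eta> \<mu>)
    \<and> (Bset J \<gamma> = {} \<and> irreducible_matrix J ra \<longrightarrow>
         ergodic_ctmc (jstates J) (jackson_q_gamma J lam \<gamma> \<mu> ra))
    \<and> (Bset J \<gamma> \<noteq> {} \<longrightarrow>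
         \<not> irreducible_ctmc (jstates J) (jackson_q_gamma J lam \<gamma> \<mu> ra)
       \<and> infinite {{n \<in> jstates J. \<forall>j\<in>Bset J \<gamma>. n j = b j} | b. b \<in> jstates J}
       \<and> (\<forall>b\<in>jstates J. closed_set (jstates J) (jackson_q_gamma J lam \<gamma> \<mu> ra)
                            {n \<in> jstates J. \<forall>j\<in>Bset J \<gamma>. n j = b j})
       \<and> (\<forall>\<phi> :: (nat \<Rightarrow> nat) \<Rightarrow> real.
            (\<forall>m\<in>{m. \<forall>j. j \<notin> Bset J \<gamma> \<longrightarrow> m j = 0}. 0 \<le> \<phi> m)
            \<and> (\<phi> has_sum 1) {m. \<forall>j. j \<notin> Bset J \<gamma> \<longrightarrow> m j = 0}
            \<longrightarrow> stationary_dist (jstates J) (jackson_q_gamma J lam \<gamma> \<mu> ra)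
                  (\<lambda>n. (\<Prod>j\<in>Wset J \<gamma>. node_factor \<eta> \<mu> j (n j))
                        * \<phi> (\<lambda>j. if j \<in> Bset J \<gamma> then n j else 0))))"
proof -
  have "1 \<le> J" using lam_pos by (cases J) (simp_all add: lam_def)
  then interpret jackson_gamma_network J lam \<mu> r \<eta> \<gamma> ra
    using mu_pos r_stoch r_irred eta_0 eta_traffic C_fin gamma_nonneg ra_stoch ra_inv lam_pos
    by unfold_locales auto
  have blocked_states: "{m. \<forall>j. j \<notin> B \<longrightarrow> m j = 0} = vanishing_outside B"
    by (simp add: vanishing_outside_def)
  show ?thesis
    using xi_stationary irreducible_if_unblocked positive_recurrent_states not_irreducible infinite_frozen_classes
      frozen_class_closed product_form_stationary
    unfolding ergodic_ctmc_def frozen_class_def[abs_def] product_form_def[abs_def] blocked_states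
    by blast
qed

end
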